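(* Let $m>1$, $l>1$ with $1/m+1/l=1$, and let $f:[0,1]\to[0,1]$ be the skew tent map $f(x)=mx$ for $0\le x\le 1/m$, $f(x)=l(1-x)$ for $1/m<x\le1$ (for which Lebesgue measure is the unique absolutely continuous invariant probability measure and is ergodic). Then $H(f)=\lambda(f)+D(f)$ with $\lambda(f)=\frac1m\log m+\frac1l\log l$ and: (1) if $m=2$, $D(f)=0$; (2) if $m$ is rational, $m\ne2$, written $m=(p+q)/p$ in lowest terms with integers $p,q\ge1$, then $$D(f)=\frac{2p}{(p+q)^2}\sum_{n=1}^{p-1}\phi\Big(\frac np\Big)+\frac{2q}{(p+q)^2}\sum_{n=1}^{q-1}\phi\Big(\frac nq\Big)$$ (an empty sum being $0$); (3) if $m$ is irrational, $D(f)=\dfrac{m^2-2m+2}{2m^2}$.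
   Context: $\phi(t)=-t\log t$ ($t>0$), $\phi(0)=0$. For an equivolume partition $\Delta=\{A^{(1)},\dots,A^{(N)}\}$ of $[0,1]$ into pairwise disjoint subintervals of Lebesgue measure $1/N$, set $p_\Delta(n'|n)=N\,\mathrm{Leb}(f^{-1}(A^{(n')})\cap A^{(n)})$ and $H_\Delta(f)=\sum_{n,n'}\frac1N\phi(p_\Delta(n'|n))$; $H(f)$ denotes $\lim_{N\to\infty}H_\Delta(f)$ over equivolume partitions with $N$ cells (the limit exists), and $\lambda(f)=\int_0^1\log|f'(x)|\,dx$. *)

theory Defs
  imports "HOL-Analysis.Analysis"
begin

definition phi :: "real \<Rightarrow> real" where
  "phi t = (if t = 0 then 0 else - t * ln t)"

definition equivolume_partition :: "nat \<Rightarrow> (nat \<Rightarrow> real set) \<Rightarrow> bool" where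
  "equivolume_partition N A \<longleftrightarrow>
     (\<forall>n<N. is_interval (A n) \<and> A n \<subseteq> {0..1} \<and> A n \<in> sets lebesgue
            \<and> measure lebesgue (A n) = 1 / real N)
   \<and> (\<forall>n<N. \<forall>n'<N. n \<noteq> n' \<longrightarrow> A n \<inter> A n' = {})
   \<and> (\<Union>n<N. A n) = {0..1}"

definition trans_prob :: "nat \<Rightarrow> (nat \<Rightarrow> real set) \<Rightarrow> (real \<Rightarrow> real) \<Rightarrow> nat \<Rightarrow> nat \<Rightarrow> real" where
  "trans_prob N A f n n' = real N * measure lebesgue (f -` A n' \<inter> A n)"

definition H_part :: "nat \<Rightarrow> (nat \<Rightarrow> real set) \<Rightarrow> (real \<Rightarrow> real) \<Rightarrow> real" where
  "H_part N A f = (\<Sum>n<N. \<Sum>n'<N. (1 / real N) * phi (trans_prob N A f n n'))"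

definition H_limit :: "(real \<Rightarrow> real) \<Rightarrow> real \<Rightarrow> bool" where
  "H_limit f L \<longleftrightarrow>
     (\<forall>\<Delta> :: nat \<Rightarrow> nat \<Rightarrow> real set.
        (\<forall>N\<ge>1. equivolume_partition N (\<Delta> N)) \<longrightarrow>
        (\<lambda>N. H_part N (\<Delta> N) f) \<longlonglongrightarrow> L)"

definition lyap :: "(real \<Rightarrow> real) \<Rightarrow> real" where
  "lyap f = integral {0..1} (\<lambda>x. ln \<bar>deriv f x\<bar>)"

end

theory Submission
  imports Defs "HOL-Real_Asymp.Real_Asymp"
begin

(*
  (1) An equivolume partition of [0,1] into N intervals is, after relabelling the cells and up
      to endpoints, the uniform grid of cells [i/N, (i+1)/N].  As T is continuous with finite
      fibres, endpoints carry no mass, so H_Delta(T) equals the grid entropy H_grid N.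
  (2) A grid row i inside a branch of slope s (s = m or s = l) is mapped affinely onto an
      interval of length s/N.  It spreads its mass with density 1/s over about s cells, covering
      two of them only partially, so it contributes (ln s + e_s(k)/s)/N with the edge entropy
      e_s(k) = phi (1 - frac (s k)) + phi (frac (s k + s)), k the index of the row in its branch.
      The single row through the turning point 1/m contributes O(1/N).
  (3) Hence H_grid N -> (1/m)(ln m + c_m/m) + (1/l)(ln l + c_l/l), where c_s is the Cesaro limit
      of e_s; the Lyapunov exponent is (1/m) ln m + (1/l) ln l.
  (4) c_s is an average of continuous functions along the rotation k |-> frac (s k): for rational
      s = (p+q)/p it is the average over the grid j/p, for irrational s it is 2 * integral phi = 1/2
      (Weyl's equidistribution theorem, derived here from Dirichlet approximation).
*)

section \<open>Cesaro means\<close>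

definition cesaro_mean :: "(nat \<Rightarrow> real) \<Rightarrow> nat \<Rightarrow> real" where
  "cesaro_mean a n = (\<Sum>i<n. a i) / real n"

lemma sum_lessThan_add:
  fixes a :: "nat \<Rightarrow> 'a::comm_monoid_add"
  shows "(\<Sum>i<m+n. a i) = (\<Sum>i<m. a i) + (\<Sum>j<n. a (m+j))"
  by (induction n) (auto simp: add.assoc)

lemma block_sums_bound:
  fixes a :: "nat \<Rightarrow> real"
  assumes k: "k > 0" and blk: "\<And>n0. \<bar>(\<Sum>j<k. a (n0+j)) - k*c\<bar> \<le> k*e"
    and M: "\<And>i. \<bar>a i\<bar> \<le> M" and cM: "\<bar>c\<bar> \<le> M" and e: "e \<ge> 0"
  shows "\<bar>(\<Sum>i<L. a i) - L*c\<bar> \<le> L*e + 2*real k*M"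
proof (induction L rule: less_induct)
  case (less L)
  show ?case
  proof (cases "L < k")
    case True
    have "\<bar>(\<Sum>i<L. a i)\<bar> \<le> (\<Sum>i<L. \<bar>a i\<bar>)" by (rule sum_abs)
    also have "\<dots> \<le> (\<Sum>i<L. M)" by (rule sum_mono) (rule M)
    finally have "\<bar>(\<Sum>i<L. a i)\<bar> \<le> L*M" by simp
    moreover have "\<bar>L*c\<bar> \<le> L*M" using cM by (simp add: abs_mult mult_left_mono)
    moreover have "real L * M \<le> k*M" using True cM by (simp add: mult_right_mono)
    moreover have "0 \<le> real L * e" using e by simp
    ultimately show ?thesis unfolding abs_le_iff by linarith
  next
    case False
    then obtain L' where L: "L = L' + k" by (metis add.commute le_add_diff_inverse not_less)
    have IH: "\<bar>(\<Sum>i<L'. a i) - L'*c\<bar> \<le> L'*e + 2*real k*M" using less L k by simp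
    have "(\<Sum>i<L. a i) = (\<Sum>i<L'. a i) + (\<Sum>j<k. a (L'+j))" unfolding L by (rule sum_lessThan_add)
    moreover have "real L * c = L'*c + k*c" "real L * e = L'*e + k*e" unfolding L by (simp_all add: algebra_simps)
    ultimately show ?thesis using IH blk[of L'] by linarith
  qed
qed

lemma cesaro_from_blocks:
  fixes a :: "nat \<Rightarrow> real"
  assumes blk: "\<And>e. e > 0 \<Longrightarrow> \<exists>k>0. \<forall>n0. \<bar>(\<Sum>j<k. a (n0+j)) - k*c\<bar> \<le> k*e"
    and M: "\<And>i. \<bar>a i\<bar> \<le> M" and cM: "\<bar>c\<bar> \<le> M"
  shows "cesaro_mean a \<longlonglongrightarrow> c"
proof (rule LIMSEQ_I)
  fix r :: real assume r: "r > 0"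
  obtain k where k: "k > 0" and kb: "\<forall>n0. \<bar>(\<Sum>j<k. a (n0+j)) - k*c\<bar> \<le> k*(r/2)"
    using blk[of "r/2"] r by auto
  have M0: "M \<ge> 0" using cM by linarith
  obtain no :: nat where no: "real no > 4*real k*M/r + 1" using reals_Archimedean2 by blast
  show "\<exists>no. \<forall>L\<ge>no. norm (cesaro_mean a L - c) < r"
  proof (intro exI allI impI)
    fix L assume L: "L \<ge> no"
    have "4*real k*M/r \<ge> 0" using M0 r by simp
    hence Lpos: "real L > 0" using L no by linarith
    have b: "\<bar>(\<Sum>i<L. a i) - L*c\<bar> \<le> L*(r/2) + 2*real k*M"
      by (rule block_sums_bound[OF k _ M cM]) (use kb r in auto)
    have "norm (cesaro_mean a L - c) = \<bar>(\<Sum>i<L. a i) - L*c\<bar> / L"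
      using Lpos by (simp add: cesaro_mean_def field_simps)
    also have "\<dots> \<le> (L*(r/2) + 2*real k*M) / L" using b Lpos by (simp add: divide_right_mono)
    also have "\<dots> = r/2 + 2*real k*M/L" using Lpos by (simp add: field_simps)
    also have "2*real k*M/L < r/2"
    proof -
      have "real L > 4*real k*M/r" using L no by linarith
      hence "real L * r > 4*real k*M" using r by (simp add: field_simps)
      thus ?thesis using Lpos r by (simp add: field_simps)
    qed
    finally show "norm (cesaro_mean a L - c) < r" by linarith
  qed
qed

lemma sum_close:
  fixes f g :: "nat \<Rightarrow> real"
  assumes "\<And>j. j < k \<Longrightarrow> \<bar>f j - g j\<bar> \<le> c"
  shows "\<bar>(\<Sum>j<k. f j) - (\<Sum>j<k. g j)\<bar> \<le> k*c"
proof -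
  have "\<bar>(\<Sum>j<k. f j) - (\<Sum>j<k. g j)\<bar> \<le> (\<Sum>j<k. \<bar>f j - g j\<bar>)"
    by (simp add: sum_subtractf[symmetric] sum_abs)
  also have "\<dots> \<le> (\<Sum>j<k. c)" by (rule sum_mono) (use assms in auto)
  finally show ?thesis by simp
qed


lemma lim_by_bound:
  fixes x :: "nat \<Rightarrow> real"
  assumes "\<And>N. N \<ge> 1 \<Longrightarrow> \<bar>x N - c\<bar> \<le> C / real N"
  shows "x \<longlonglongrightarrow> c"
proof -
  have "eventually (\<lambda>N. norm (x N - c) \<le> C / real N) sequentially"
    using assms by (auto simp: eventually_sequentially)
  hence "(\<lambda>N. x N - c) \<longlonglongrightarrow> 0" by (rule Lim_null_comparison) (rule lim_const_over_n)
  thus ?thesis by (rule LIM_zero_cancel)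
qed

lemma sum_as_cesaro_mean:
  fixes a :: "nat \<Rightarrow> real"
  shows "(\<Sum>i<L. (c + a i / s)) / real N = (real L / real N) * (c + cesaro_mean a L / s)"
proof (cases "L = 0")
  case False
  have "(\<Sum>i<L. (c + a i / s)) = real L * c + (\<Sum>i<L. a i) / s"
    by (simp add: sum.distrib sum_divide_distrib)
  thus ?thesis using False by (simp add: cesaro_mean_def field_simps)
qed simp

section \<open>Equidistribution of rotations\<close>

lemma periodic_frac_uniform_continuity:
  fixes G :: "real \<Rightarrow> real"
  assumes cont: "continuous_on {0..1} G" and G01: "G 0 = G 1" and e: "e > 0"
  obtains d where "d > 0" "\<And>x y. \<bar>x - y\<bar> < d \<Longrightarrow> \<bar>G (frac x) - G (frac y)\<bar> < e"
proof -
  have "uniformly_continuous_on {0..1} G"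
    using cont by (simp add: compact_uniformly_continuous)
  then obtain d0 where d0: "d0 > 0" and
    uc: "\<And>s t. s \<in> {0..1} \<Longrightarrow> t \<in> {0..1} \<Longrightarrow> dist t s < d0 \<Longrightarrow> dist (G t) (G s) < e/2"
    unfolding uniformly_continuous_on_def using e by (metis half_gt_zero)
  define d where "d = min d0 1"
  have uc': "\<bar>G s - G t\<bar> < e/2" if "s \<in> {0..1}" "t \<in> {0..1}" "\<bar>s - t\<bar> < d" for s t
    using uc[OF that(2,1)] that(3) by (simp add: d_def dist_real_def)
  have fr: "frac z \<in> {0..1}" for z :: real using frac_lt_1[of z] by simp
  have "\<bar>G (frac x) - G (frac y)\<bar> < e" if xy: "\<bar>x - y\<bar> < d" for x y
  proof -
    define X where "X = \<lfloor>x\<rfloor>"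
    define Y where "Y = \<lfloor>y\<rfloor>"
    have x: "x = of_int X + frac x" and y: "y = of_int Y + frac y" by (simp_all add: frac_def X_def Y_def)
    have fx: "0 \<le> frac x" "frac x < 1" and fy: "0 \<le> frac y" "frac y < 1" using frac_lt_1 by auto
    have "\<bar>x - y\<bar> < 1" using xy by (simp add: d_def)
    hence "\<bar>real_of_int (Y - X)\<bar> < 2" using x y fx fy by linarith
    hence "\<bar>Y - X\<bar> < 2" by linarith
    hence "Y - X = 0 \<or> Y - X = 1 \<or> Y - X = -1" by linarith
    moreover {
      assume "Y - X = 0"
      hence "real_of_int Y = real_of_int X" by simp
      hence "\<bar>frac x - frac y\<bar> < d" using x y xy by linarith
      hence ?thesis using uc'[OF fr fr] e by fastforce
    } moreover {
      assume "Y - X = 1"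
      hence "real_of_int Y = real_of_int X + 1" by linarith
      hence "\<bar>frac x - 1\<bar> < d" "\<bar>frac y - 0\<bar> < d" using x y xy fx fy by linarith+
      hence "\<bar>G (frac x) - G 1\<bar> < e/2" "\<bar>G (frac y) - G 0\<bar> < e/2" using uc'[OF fr] by auto
      hence ?thesis using G01 by linarith
    } moreover {
      assume "Y - X = -1"
      hence "real_of_int X = real_of_int Y + 1" by linarith
      hence "\<bar>frac y - 1\<bar> < d" "\<bar>frac x - 0\<bar> < d" using x y xy fx fy by linarith+
      hence "\<bar>G (frac y) - G 1\<bar> < e/2" "\<bar>G (frac x) - G 0\<bar> < e/2" using uc'[OF fr] by auto
      hence ?thesis using G01 by linarith
    }
    ultimately show ?thesis by blast
  qed
  moreover have "d > 0" using d0 by (simp add: d_def)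
  ultimately show ?thesis using that by blast
qed

text \<open>For h coprime to k, the points (h j + r)/k, j < k, run through all residues j/k modulo 1,
  so a sum over them is a sum over the uniform grid.\<close>
lemma sum_frac_rotation_perm:
  fixes G :: "real \<Rightarrow> real" and h r :: int and k :: nat
  assumes k: "k > 0" and cop: "coprime h (int k)"
  shows "(\<Sum>j<k. G (frac (y + real_of_int (h * int j + r) / real k))) = (\<Sum>j<k. G (frac (y + j / k)))"
proof -
  define \<sigma> where "\<sigma> j = nat ((h * int j + r) mod int k)" for j :: nat
  have eq: "frac (y + real_of_int (h * int j + r) / real k) = frac (y + \<sigma> j / k)" for j :: nat
  proof -
    have "h * int j + r = int k * ((h * int j + r) div int k) + (h * int j + r) mod int k"
      by simp
    moreover have "(h * int j + r) mod int k \<ge> 0" using k by simp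
    ultimately have "real_of_int (h * int j + r) = real k * of_int ((h * int j + r) div int k) + real (\<sigma> j)"
      unfolding \<sigma>_def by (metis of_int_add of_int_mult of_int_of_nat_eq of_nat_nat)
    hence "y + real_of_int (h * int j + r) / real k = (y + \<sigma> j / k) + of_int ((h * int j + r) div int k)"
      using k by (simp add: field_simps)
    thus ?thesis by (metis frac_add_of_int_right)
  qed
  have inj: "inj_on \<sigma> {..<k}"
  proof (rule inj_onI)
    fix a b assume a: "a \<in> {..<k}" and b: "b \<in> {..<k}" and ab: "\<sigma> a = \<sigma> b"
    have "(h * int a + r) mod int k = (h * int b + r) mod int k"
      using ab k unfolding \<sigma>_def by (metis int_nat_eq mod_int_pos_iff of_nat_0_less_iff)
    hence "int k dvd h * (int a - int b)" by (simp add: mod_eq_dvd_iff algebra_simps)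
    hence "int k dvd (int a - int b)" using cop by (metis coprime_commute coprime_dvd_mult_right_iff)
    moreover have "\<bar>int a - int b\<bar> < int k" using a b by auto
    ultimately have "int a - int b = 0" using dvd_imp_le_int[of "int a - int b" "int k"] by fastforce
    thus "a = b" by simp
  qed
  have "\<sigma> ` {..<k} \<subseteq> {..<k}"
    using k by (auto simp: \<sigma>_def nat_less_iff)
  hence bij: "bij_betw \<sigma> {..<k} {..<k}"
    unfolding bij_betw_def using inj endo_inj_surj[of "{..<k}" \<sigma>] by auto
  have "(\<Sum>j<k. G (frac (y + real_of_int (h * int j + r) / real k))) = (\<Sum>j<k. G (frac (y + \<sigma> j / k)))"
    by (rule sum.cong[OF refl], rule arg_cong[where f=G], rule eq)
  also have "\<dots> = (\<Sum>j<k. G (frac (y + j / k)))"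
    by (rule sum.reindex_bij_betw[OF bij, where g="\<lambda>j. G (frac (y + j / k))"])
  finally show ?thesis .
qed

lemma frac_grid_point: "j < k \<Longrightarrow> frac (real j / real k) = real j / real k"
  by (intro frac_eq_id) (auto simp: field_simps)

lemma continuous_bound_with_integral:
  fixes G :: "real \<Rightarrow> real"
  assumes cont: "continuous_on {0..1} G"
  obtains M where "\<And>s. s \<in> {0..1} \<Longrightarrow> \<bar>G s\<bar> \<le> M" "\<bar>integral {0..1} G\<bar> \<le> M"
proof -
  have "bounded (G ` {0..1})" by (rule compact_imp_bounded[OF compact_continuous_image[OF cont compact_Icc]])
  then obtain M where "\<forall>x\<in>G ` {0..1}. norm x \<le> M" unfolding bounded_iff by blast
  hence M: "\<And>s. s \<in> {0..1} \<Longrightarrow> \<bar>G s\<bar> \<le> M" by auto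
  have "norm (integral {0..1} G) \<le> M * (1 - 0)" by (rule integral_bound) (use cont M in auto)
  thus ?thesis using that M by auto
qed

lemma riemann_sum_error:
  fixes G :: "real \<Rightarrow> real" and k :: nat and e :: real
  assumes cont: "continuous_on {0..1} G" and k: "k > 0"
    and close: "\<And>s t. s \<in> {0..1} \<Longrightarrow> t \<in> {0..1} \<Longrightarrow> \<bar>s - t\<bar> \<le> 1/k \<Longrightarrow> \<bar>G s - G t\<bar> \<le> e"
  shows "\<bar>(\<Sum>j<k. G (j/k)) - k * integral {0..1} G\<bar> \<le> k*e"
proof -
  have kr: "real k > 0" using k by simp
  have split: "integral {0..real n/k} G = (\<Sum>j<n. integral {real j/k..real (Suc j)/k} G)" if "n \<le> k" for n
    using that
  proof (induction n)
    case (Suc n)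
    have le: "real (Suc n) / k \<le> 1" using Suc.prems kr by (simp add: field_simps)
    have int: "G integrable_on {0..real (Suc n)/k}"
      by (rule integrable_continuous_real, rule continuous_on_subset[OF cont]) (use le in auto)
    have "integral {0..real n/k} G + integral {real n/k..real (Suc n)/k} G = integral {0..real (Suc n)/k} G"
      by (rule Henstock_Kurzweil_Integration.integral_combine) (use kr int in \<open>auto simp: field_simps\<close>)
    then show ?case using Suc by simp
  qed simp
  have piece: "\<bar>G (j/k) - k * integral {real j/k..real (Suc j)/k} G\<bar> \<le> e" if j: "j < k" for j
  proof -
    define a where "a = real j / k"
    define b where "b = real (Suc j) / k"
    have ab: "a \<le> b" "b - a = 1/k" "{a..b} \<subseteq> {0..1}" using j kr by (auto simp: a_def b_def field_simps)
    have cab: "continuous_on {a..b} G" using continuous_on_subset[OF cont ab(3)] .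
    have "norm (integral {a..b} (\<lambda>t. G t - G a)) \<le> e * (b - a)"
    proof (rule integral_bound)
      show "continuous_on {a..b} (\<lambda>t. G t - G a)" using cab by (intro continuous_intros)
      fix t assume t: "t \<in> {a..b}"
      thus "norm (G t - G a) \<le> e" using close[of t a] ab by auto
    qed (use ab in auto)
    moreover have "integral {a..b} (\<lambda>t. G t - G a) = integral {a..b} G - G a * (b - a)"
      using integral_diff[OF integrable_continuous_real[OF cab] integrable_const_ivl, of "G a"] ab by simp
    ultimately have "\<bar>integral {a..b} G - G a / k\<bar> \<le> e / k" using ab by (simp add: divide_inverse)
    hence "k * \<bar>integral {a..b} G - G a / k\<bar> \<le> k * (e / k)" by (rule mult_left_mono) simp
    thus ?thesis using kr by (simp add: a_def b_def field_simps abs_minus_commute flip: abs_mult_pos)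
  qed
  have I: "integral {0..1} G = (\<Sum>j<k. integral {real j/k..real (Suc j)/k} G)"
    using split[of k] kr by simp
  have "\<bar>(\<Sum>j<k. G (j/k)) - k * integral {0..1} G\<bar>
      = \<bar>(\<Sum>j<k. G (j/k)) - (\<Sum>j<k. k * integral {real j/k..real (Suc j)/k} G)\<bar>"
    by (simp add: I sum_distrib_left)
  also have "\<dots> \<le> k * e" by (rule sum_close) (rule piece)
  finally show ?thesis .
qed

text \<open>Rational rotations: the orbit of j |-> (q j + r)/p mod 1 is periodic with period p and
  visits each grid point i/p once per period.\<close>
theorem rational_rotation_cesaro:
  fixes G :: "real \<Rightarrow> real" and q r :: int and p :: nat
  assumes cont: "continuous_on {0..1} G" and p: "p > 0" and cop: "coprime q (int p)"
  shows "cesaro_mean (\<lambda>i. G (frac (real_of_int (q * int i + r) / real p)))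
           \<longlonglongrightarrow> (\<Sum>j<p. G (real j / real p)) / p"
proof -
  obtain M where M: "\<And>s. s \<in> {0..1} \<Longrightarrow> \<bar>G s\<bar> \<le> M" using continuous_bound_with_integral[OF cont] by blast
  have fr: "frac z \<in> {0..1}" for z :: real using frac_lt_1[of z] by simp
  have blk: "(\<Sum>j<p. G (frac (real_of_int (q * int (n0 + j) + r) / real p))) = (\<Sum>j<p. G (real j / real p))" for n0
  proof -
    have "(\<Sum>j<p. G (frac (real_of_int (q * int (n0 + j) + r) / real p)))
        = (\<Sum>j<p. G (frac (0 + real_of_int (q * int j + (q * int n0 + r)) / real p)))"
      by (simp add: algebra_simps)
    also have "\<dots> = (\<Sum>j<p. G (frac (0 + real j / real p)))" by (rule sum_frac_rotation_perm[OF p cop])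
    finally show ?thesis by (simp add: frac_grid_point)
  qed
  have "\<bar>(\<Sum>j<p. G (real j / real p))\<bar> \<le> p * M"
    using sum_close[of p "\<lambda>j. G (real j / real p)" "\<lambda>_. 0" M] M by (simp add: field_simps)
  hence M0: "\<bar>(\<Sum>j<p. G (real j / real p)) / p\<bar> \<le> M" using p by (simp add: field_simps)
  show ?thesis
    by (rule cesaro_from_blocks[where M=M]) (use blk p M fr M0 in auto)
qed

lemma shifted_grid_sum:
  fixes G :: "real \<Rightarrow> real" and k :: nat
  assumes k: "k > 0" and kd: "1 / real k < d"
    and ucf: "\<And>x y. \<bar>x - y\<bar> < d \<Longrightarrow> \<bar>G (frac x) - G (frac y)\<bar> < e"
  shows "\<bar>(\<Sum>j<k. G (frac (x + real j / real k))) - (\<Sum>j<k. G (real j / real k))\<bar> \<le> real k * e"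
proof -
  have kr: "real k > 0" using k by simp
  define r where "r = \<lfloor>real k * frac x\<rfloor>"
  define w where "w = frac x - of_int r / real k"
  have a: "of_int r \<le> real k * frac x" "real k * frac x < of_int r + 1" unfolding r_def by linarith+
  have "of_int r / real k \<le> frac x" using a kr by (simp add: divide_le_eq mult.commute)
  moreover have "frac x < (of_int r + 1) / real k" using a kr by (simp add: less_divide_eq mult.commute)
  ultimately have w: "0 \<le> w" "w < 1 / real k" unfolding w_def by (auto simp: add_divide_distrib)
  have xeq: "x + real j / real k = (w + real_of_int (1 * int j + r) / real k) + of_int \<lfloor>x\<rfloor>" for j
    unfolding w_def frac_def using kr by (simp add: field_simps)
  have "(\<Sum>j<k. G (frac (x + real j / real k))) = (\<Sum>j<k. G (frac (w + real_of_int (1 * int j + r) / real k)))"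
    by (intro sum.cong refl) (metis xeq frac_add_of_int_right)
  also have "\<dots> = (\<Sum>j<k. G (frac (w + real j / real k)))" by (rule sum_frac_rotation_perm[OF k]) simp
  finally have shift: "(\<Sum>j<k. G (frac (x + real j / real k))) = (\<Sum>j<k. G (frac (w + real j / real k)))" .
  have "\<bar>(\<Sum>j<k. G (frac (w + real j / real k))) - (\<Sum>j<k. G (real j / real k))\<bar> \<le> k * e"
  proof (rule sum_close)
    fix j assume j: "j < k"
    have "\<bar>(w + real j / real k) - real j / real k\<bar> < d" using w kd by auto
    thus "\<bar>G (frac (w + real j / real k)) - G (real j / real k)\<bar> \<le> e"
      using ucf frac_grid_point[OF j] by (metis less_imp_le)
  qed
  thus ?thesis unfolding shift .
qed

lemma rotation_block_near_grid:
  fixes G :: "real \<Rightarrow> real" and \<alpha> t :: real and h :: int and k n0 :: nat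
  assumes k: "k > 0" and cop: "coprime h (int k)"
    and app: "\<bar>\<alpha> - of_int h / real k\<bar> < 1 / (real k)\<^sup>2" and kd: "1 / real k < d"
    and ucf: "\<And>x y. \<bar>x - y\<bar> < d \<Longrightarrow> \<bar>G (frac x) - G (frac y)\<bar> < e"
  shows "\<bar>(\<Sum>j<k. G (frac (\<alpha> * real (n0 + j) + t))) - (\<Sum>j<k. G (real j / real k))\<bar> \<le> 2 * real k * e"
proof -
  have kr: "real k > 0" using k by simp
  define x where "x = \<alpha> * real n0 + t"
  have near: "\<bar>(\<Sum>j<k. G (frac (\<alpha> * real (n0 + j) + t))) - (\<Sum>j<k. G (frac (x + real_of_int (h * int j + 0) / real k)))\<bar> \<le> k * e"
  proof (rule sum_close)
    fix j assume j: "j < k"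
    have "\<alpha> * real (n0 + j) + t - (x + real_of_int (h * int j + 0) / real k) = real j * (\<alpha> - of_int h / real k)"
      unfolding x_def by (simp add: algebra_simps)
    hence "\<bar>\<alpha> * real (n0 + j) + t - (x + real_of_int (h * int j + 0) / real k)\<bar> = real j * \<bar>\<alpha> - of_int h / real k\<bar>"
      by (simp add: abs_mult)
    also have "\<dots> \<le> real k * \<bar>\<alpha> - of_int h / real k\<bar>" using j by (intro mult_right_mono) auto
    also have "\<dots> < real k * (1 / (real k)\<^sup>2)" using app kr by (intro mult_strict_left_mono) auto
    also have "\<dots> = 1 / real k" using kr by (simp add: power2_eq_square)
    finally show "\<bar>G (frac (\<alpha> * real (n0 + j) + t)) - G (frac (x + real_of_int (h * int j + 0) / real k))\<bar> \<le> e"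
      using ucf kd by (meson less_imp_le less_trans)
  qed
  have "(\<Sum>j<k. G (frac (x + real_of_int (h * int j + 0) / real k))) = (\<Sum>j<k. G (frac (x + real j / real k)))"
    by (rule sum_frac_rotation_perm[OF k cop])
  with near shifted_grid_sum[where G=G and e=e, OF k kd ucf, of x] show ?thesis by linarith
qed

text \<open>Weyl's equidistribution theorem for an irrational rotation, for continuous G with
  G 0 = G 1 (so that G o frac is continuous).\<close>
theorem weyl_equidistribution:
  fixes G :: "real \<Rightarrow> real" and \<alpha> t :: real
  assumes cont: "continuous_on {0..1} G" and G01: "G 0 = G 1" and irr: "\<alpha> \<notin> \<rat>"
  shows "cesaro_mean (\<lambda>i. G (frac (\<alpha> * real i + t))) \<longlonglongrightarrow> integral {0..1} G"
proof -
  obtain M where M: "\<And>s. s \<in> {0..1} \<Longrightarrow> \<bar>G s\<bar> \<le> M" and IM: "\<bar>integral {0..1} G\<bar> \<le> M"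
    using continuous_bound_with_integral[OF cont] by blast
  have fr: "frac z \<in> {0..1}" for z :: real using frac_lt_1[of z] by simp
  have G_frac: "G (frac s) = G s" if "s \<in> {0..1}" for s
    using that G01 by (cases "s = 1") (auto simp: frac_eq_id)
  have blocks: "\<exists>k>0. \<forall>n0. \<bar>(\<Sum>j<k. G (frac (\<alpha> * real (n0 + j) + t))) - real k * integral {0..1} G\<bar> \<le> real k * e"
    if e: "e > 0" for e
  proof -
    obtain d where d: "d > 0" and ucf: "\<And>x y. \<bar>x - y\<bar> < d \<Longrightarrow> \<bar>G (frac x) - G (frac y)\<bar> < e/3"
      using periodic_frac_uniform_continuity[OF cont G01, of "e/3"] e by auto
    have "infinite (approx_set \<alpha>)" using rational_iff_finite_approx_set irr by blast
    then obtain h kk where hk: "(h, kk) \<in> approx_set \<alpha>" and kK: "kk > \<lceil>1/d\<rceil>"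
      using infinite_approx_set by blast
    define k where "k = nat kk"
    have kk: "kk = int k" "k > 0" using hk by (auto simp: approx_set_def k_def)
    have cop: "coprime h (int k)" and app: "\<bar>\<alpha> - of_int h / real k\<bar> < 1 / (real k)\<^sup>2"
      using hk kk by (auto simp: approx_set_def)
    have "real k > 1/d" using kK kk by linarith
    hence kd: "1 / real k < d" using d kk by (simp add: field_simps)
    have riemann: "\<bar>(\<Sum>j<k. G (real j / real k)) - k * integral {0..1} G\<bar> \<le> k * (e/3)"
    proof (rule riemann_sum_error[OF cont \<open>k > 0\<close>])
      fix s u :: real assume "s \<in> {0..1}" "u \<in> {0..1}" "\<bar>s - u\<bar> \<le> 1 / real k"
      thus "\<bar>G s - G u\<bar> \<le> e/3" using ucf[of s u] kd G_frac by fastforce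
    qed
    show ?thesis
    proof (intro exI[of _ k] conjI allI)
      fix n0
      have "\<bar>(\<Sum>j<k. G (frac (\<alpha> * real (n0 + j) + t))) - (\<Sum>j<k. G (real j / real k))\<bar> \<le> 2 * real k * (e/3)"
        by (rule rotation_block_near_grid[where G=G and e="e/3", OF \<open>k > 0\<close> cop app kd ucf])
      moreover have "2 * real k * (e/3) + real k * (e/3) = real k * e" by (simp add: algebra_simps)
      ultimately show "\<bar>(\<Sum>j<k. G (frac (\<alpha> * real (n0 + j) + t))) - real k * integral {0..1} G\<bar> \<le> real k * e"
        using riemann by linarith
    qed (rule \<open>k > 0\<close>)
  qed
  show ?thesis
    by (rule cesaro_from_blocks[where M=M]) (use blocks M fr IM in auto)
qed

section \<open>The function phi\<close>

text \<open>phi vanishes at 0 and 1; these make phi and phi (1 - t) agree at the ends of [0,1].\<close>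
lemma phi_0 [simp]: "phi 0 = 0" and phi_1 [simp]: "phi 1 = 0"
  by (simp_all add: phi_def)

lemma phi_mult: assumes "x \<ge> 0" "y \<ge> 0" shows "phi (x*y) = x * phi y + y * phi x"
proof (cases "x = 0 \<or> y = 0")
  case False
  then have "x > 0" "y > 0" using assms by auto
  then show ?thesis by (simp add: phi_def ln_mult algebra_simps)
qed (auto simp: phi_def)

lemma phi_scale:
  assumes "z \<ge> 0" "s > 0"
  shows "phi (z / s) = (z / s) * ln s + phi z / s"
proof -
  have "phi (z * (1/s)) = z * phi (1/s) + (1/s) * phi z" using assms by (intro phi_mult) auto
  moreover have "phi (1/s) = ln s / s" using assms by (simp add: phi_def ln_div)
  ultimately show ?thesis by (simp add: field_simps)
qed

text \<open>phi t \<le> 1 - t \<le> 1, from ln x \<le> x - 1.\<close>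
lemma phi_le1: assumes "t \<ge> 0" shows "phi t \<le> 1"
proof (cases "t = 0")
  case False
  hence t: "t > 0" using assms by simp
  have "ln (1/t) \<le> 1/t - 1" using t by (intro ln_le_minus_one) simp
  hence "t * (- ln t) \<le> t * (1/t - 1)" using t by (intro mult_left_mono) (auto simp: ln_div)
  thus ?thesis using t by (simp add: phi_def algebra_simps)
qed simp

lemma phi_ge0: assumes "t \<ge> 0" "t \<le> 1" shows "phi t \<ge> 0"
  using assms by (simp add: phi_def mult_nonneg_nonpos)

lemma continuous_on_unit_interval_from_right:
  fixes F :: "real \<Rightarrow> real"
  assumes "\<And>x. x > 0 \<Longrightarrow> isCont F x" "(F \<longlongrightarrow> F 0) (at_right 0)"
  shows "continuous_on {0..1} F"
  unfolding continuous_on_eq_continuous_within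
proof
  fix x :: real assume x: "x \<in> {0..1}"
  show "continuous (at x within {0..1}) F"
  proof (cases "x = 0")
    case True
    have "at (0::real) within {0..1} = at_right 0" by (rule at_within_Icc_at_right) simp
    thus ?thesis using True assms(2) by (simp add: continuous_within)
  next
    case False
    hence "x > 0" using x by simp
    thus ?thesis using assms(1) continuous_at_imp_continuous_at_within by blast
  qed
qed

lemma isCont_phi: assumes "x > 0" shows "isCont phi x"
proof -
  have "eventually (\<lambda>t. t \<in> {0<..}) (nhds x)" using assms by (intro eventually_nhds_in_open) auto
  hence ev: "eventually (\<lambda>t. phi t = - t * ln t) (nhds x)" by eventually_elim (simp add: phi_def)
  have "isCont (\<lambda>t. - t * ln t) x" using assms by (intro continuous_intros) auto
  thus ?thesis using isCont_cong[OF ev] by simp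
qed

lemma phi_tendsto_0: "(phi \<longlongrightarrow> phi 0) (at_right 0)"
proof -
  have "((\<lambda>t::real. - t * ln t) \<longlongrightarrow> 0) (at_right 0)" by real_asymp
  moreover have "eventually (\<lambda>t. - t * ln t = phi t) (at_right (0::real))"
    by (simp add: eventually_at_right_less eventually_mono phi_def)
  ultimately show ?thesis by (simp add: tendsto_cong)
qed

lemma continuous_on_phi: "continuous_on {0..1} phi"
  by (rule continuous_on_unit_interval_from_right[OF isCont_phi phi_tendsto_0])

lemma continuous_on_phi_reflected: "continuous_on {0..1} (\<lambda>t. phi (1 - t))"
proof -
  have "continuous_on {0..1} (\<lambda>t::real. 1 - t)" by (intro continuous_intros)
  moreover have "(\<lambda>t::real. 1 - t) ` {0..1} \<subseteq> {0..1}" by auto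
  ultimately show ?thesis using continuous_on_compose2[OF continuous_on_phi] by blast
qed

lemma integral_phi: "integral {0..1} phi = 1/4"
proof -
  define F where "F t = t^2/4 + t * phi t / 2" for t :: real
  have "(phi has_integral (F 1 - F 0)) {0..1}"
  proof (rule fundamental_theorem_of_calculus_interior)
    show "continuous_on {0..1} F" unfolding F_def by (intro continuous_intros continuous_on_phi) auto
    fix t :: real assume t: "t \<in> {0<..<1}"
    have "eventually (\<lambda>s. s \<in> {0<..}) (nhds t)" using t by (intro eventually_nhds_in_open) auto
    hence ev: "eventually (\<lambda>s. s^2/4 - s^2 * ln s / 2 = F s) (nhds t)"
      by eventually_elim (simp add: F_def phi_def power2_eq_square)
    have "((\<lambda>s. s^2/4 - s^2 * ln s / 2) has_real_derivative (2*t/4 - (2*t*ln t + t^2 * (1/t))/2)) (at t)"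
      using t by (auto intro!: derivative_eq_intros)
    moreover have "2*t/4 - (2*t*ln t + t^2 * (1/t))/2 = phi t"
      using t by (simp add: phi_def power2_eq_square field_simps)
    ultimately have "(F has_real_derivative phi t) (at t)" using DERIV_cong_ev[OF refl ev refl] by simp
    thus "(F has_vector_derivative phi t) (at t)" using has_real_derivative_iff_has_vector_derivative by auto
  qed simp
  thus ?thesis by (simp add: integral_unique F_def)
qed

lemma integral_reflect_unit:
  fixes G :: "real \<Rightarrow> real"
  shows "integral {0..1} (\<lambda>t. G (1 - t)) = integral {0..1} G"
proof -
  have "(\<lambda>t. G (1 - t)) = (\<lambda>s. G (- s)) \<circ> (+) (-1)" by auto
  hence "integral {0..1} (\<lambda>t. G (1 - t)) = integral {-1..0} (\<lambda>s. G (- s))"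
    using integral_shift_Icc_real[of 0 1 "\<lambda>s. G (- s)" "-1"] by simp
  also have "\<dots> = integral {0..1} G" using Henstock_Kurzweil_Integration.integral_reflect_real[of 1 0 G] by simp
  finally show ?thesis .
qed

section \<open>Equivolume partitions are uniform grids\<close>

definition grid_cell :: "nat \<Rightarrow> nat \<Rightarrow> real set" where
  "grid_cell N i = {real i / real N .. real (Suc i) / real N}"

lemma lmeasurable_sub_unit: "S \<in> sets lebesgue \<Longrightarrow> S \<subseteq> {0..1::real} \<Longrightarrow> S \<in> lmeasurable"
  by (rule fmeasurableI2[of "{0..1}"]) auto

lemma interval_sandwich:
  fixes S :: "real set"
  assumes iv: "is_interval S" and sub: "S \<subseteq> {0..1}" and ms: "S \<in> sets lebesgue"
    and me: "measure lebesgue S = \<delta>" and d: "\<delta> > 0"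
  shows "{Inf S<..<Inf S + \<delta>} \<subseteq> S" "S \<subseteq> {Inf S..Inf S + \<delta>}"
proof -
  have ne: "S \<noteq> {}" using me d by auto
  have bb: "bdd_below S" "bdd_above S"
    using sub by (intro bdd_belowI[of _ 0] bdd_aboveI[of _ 1]; auto)+
  have s1: "S \<subseteq> {Inf S..Sup S}" using bb by (auto intro: cInf_lower cSup_upper)
  have s2: "{Inf S<..<Sup S} \<subseteq> S"
  proof
    fix x assume x: "x \<in> {Inf S<..<Sup S}"
    then obtain u where u: "u \<in> S" "u < x" using cInf_less_iff[OF ne bb(1)] by auto
    obtain v where v: "v \<in> S" "x < v" using less_cSup_iff[OF ne bb(2)] x by auto
    show "x \<in> S" using iv u v unfolding is_interval_1 by (meson less_imp_le)
  qed
  have le: "Inf S \<le> Sup S" using ne bb by (meson cInf_le_cSup)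
  have "measure lebesgue {Inf S<..<Sup S} \<le> measure lebesgue S"
    by (rule measure_mono_fmeasurable[OF s2]) (use lmeasurable_sub_unit[OF ms sub] in auto)
  moreover have "measure lebesgue S \<le> measure lebesgue {Inf S..Sup S}"
    by (rule measure_mono_fmeasurable[OF s1 ms]) simp
  ultimately have "Sup S = Inf S + \<delta>" using le me by simp
  thus "{Inf S<..<Inf S + \<delta>} \<subseteq> S" "S \<subseteq> {Inf S..Inf S + \<delta>}" using s1 s2 by auto
qed

context
  fixes N :: nat and A :: "nat \<Rightarrow> real set"
  assumes ep: "equivolume_partition N A" and N: "N \<ge> 1"
begin

lemma equivolume_cell_facts:
  assumes "n < N"
  shows "is_interval (A n)" "A n \<subseteq> {0..1}" "A n \<in> sets lebesgue" "measure lebesgue (A n) = 1/N"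
    and "A n \<in> lmeasurable"
proof -
  show facts: "is_interval (A n)" "A n \<subseteq> {0..1}" "A n \<in> sets lebesgue" "measure lebesgue (A n) = 1/N"
    using ep assms unfolding equivolume_partition_def by blast+
  show "A n \<in> lmeasurable" using lmeasurable_sub_unit[OF facts(3,2)] .
qed

lemma equivolume_disjoint: "n < N \<Longrightarrow> n' < N \<Longrightarrow> n \<noteq> n' \<Longrightarrow> A n \<inter> A n' = {}"
  using ep unfolding equivolume_partition_def by blast

lemma equivolume_cover: "(\<Union>n<N. A n) = {0..1}"
  using ep unfolding equivolume_partition_def by blast

lemma equivolume_cell:
  assumes n: "n < N"
  shows "{Inf (A n)<..<Inf (A n) + 1/N} \<subseteq> A n" "A n \<subseteq> {Inf (A n)..Inf (A n) + 1/N}"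
    and "0 \<le> Inf (A n)" "Inf (A n) + 1/N \<le> 1"
proof -
  have d: "1 / real N > 0" using N by simp
  show sw: "{Inf (A n)<..<Inf (A n) + 1/N} \<subseteq> A n" "A n \<subseteq> {Inf (A n)..Inf (A n) + 1/N}"
    using interval_sandwich[OF equivolume_cell_facts(1-4)[OF n] d] by auto
  have "Inf (A n) + 1/N/2 \<in> {Inf (A n)<..<Inf (A n) + 1/N}" using N by (simp add: field_simps)
  hence mid: "Inf (A n) + 1/N/2 \<in> A n" using sw(1) by blast
  thus "0 \<le> Inf (A n)" using equivolume_cell_facts(2)[OF n] by (intro cInf_greatest) auto
  show "Inf (A n) + 1/N \<le> 1"
  proof (rule ccontr)
    assume far: "\<not> Inf (A n) + 1/N \<le> 1"
    have "\<And>a \<delta> :: real. \<delta> > 0 \<Longrightarrow> \<not> a + \<delta> \<le> 1 \<Longrightarrow>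
        (max a 1 + a + \<delta>)/2 \<in> {a<..<a + \<delta>} \<and> (max a 1 + a + \<delta>)/2 > 1"
      by (auto simp: max_def)
    then obtain z where "z \<in> {Inf (A n)<..<Inf (A n) + 1/N}" "z > 1" using d far by blast
    hence "z \<in> A n" "z > 1" using sw(1) by blast+
    thus False using equivolume_cell_facts(2)[OF n] by auto
  qed
qed

lemma equivolume_left_ends_separated:
  assumes "n < N" "n' < N" "Inf (A n') < Inf (A n)"
  shows "Inf (A n') + 1/N \<le> Inf (A n)"
proof (rule ccontr)
  assume h: "\<not> Inf (A n') + 1/N \<le> Inf (A n)"
  define z where "z = (Inf (A n) + min (Inf (A n') + 1/N) (Inf (A n) + 1/N)) / 2"
  have "z \<in> A n" "z \<in> A n'"
    using equivolume_cell(1)[OF assms(1)] equivolume_cell(1)[OF assms(2)] h N assms(3)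
    unfolding z_def by (auto simp: min_def)
  moreover have "n \<noteq> n'" using assms(3) by auto
  ultimately show False using equivolume_disjoint[OF assms(1,2)] by blast
qed

text \<open>Distinct cells have distinct left ends, since each cell contains points just right of its left end.\<close>
lemma equivolume_left_ends_inj: "inj_on (\<lambda>n. Inf (A n)) {..<N}"
proof (rule inj_onI)
  fix n n' assume n: "n \<in> {..<N}" and n': "n' \<in> {..<N}" and h: "Inf (A n) = Inf (A n')"
  have "Inf (A n) + 1/N/2 \<in> {Inf (A n)<..<Inf (A n) + 1/N}" using N by (simp add: field_simps)
  hence "Inf (A n) + 1/N/2 \<in> A n \<inter> A n'"
    using equivolume_cell(1)[of n] equivolume_cell(1)[of n'] n n' h by auto
  thus "n = n'" using equivolume_disjoint n n' by blast
qed

text \<open>The left end of a cell is 1/N times the number of cells to its left: those cells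
  fill [0, Inf (A n)] up to a null set, by disjointness and covering.\<close>
lemma equivolume_left_end_rank:
  assumes n: "n < N"
  shows "Inf (A n) = card {n'. n' < N \<and> Inf (A n') < Inf (A n)} / N"
proof -
  define S where "S = {n'. n' < N \<and> Inf (A n') < Inf (A n)}"
  have finS: "finite S" unfolding S_def by auto
  have U: "(\<Union>n'\<in>S. A n') \<in> lmeasurable"
    by (rule fmeasurable.finite_UN[OF finS]) (use equivolume_cell_facts(5) in \<open>auto simp: S_def\<close>)
  have "measure lebesgue (\<Union>n'\<in>S. A n') = (\<Sum>n'\<in>S. measure lebesgue (A n'))"
    by (rule measure_negligible_finite_Union_image[OF finS])
       (use equivolume_disjoint equivolume_cell_facts(5) in \<open>auto simp: S_def pairwise_def\<close>)
  also have "\<dots> = card S / N" using equivolume_cell_facts(4) by (simp add: S_def)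
  finally have mU: "measure lebesgue (\<Union>n'\<in>S. A n') = card S / N" .
  have "(\<Union>n'\<in>S. A n') \<subseteq> {0..Inf (A n)}"
  proof
    fix x assume "x \<in> (\<Union>n'\<in>S. A n')"
    then obtain n' where n': "n' < N" "Inf (A n') < Inf (A n)" "x \<in> A n'" unfolding S_def by auto
    thus "x \<in> {0..Inf (A n)}"
      using equivolume_left_ends_separated[OF n n'(1,2)] equivolume_cell(2,3)[OF n'(1)] by auto
  qed
  hence le1: "card S / N \<le> Inf (A n)"
    using measure_mono_fmeasurable[of "\<Union>n'\<in>S. A n'" "{0..Inf (A n)}" lebesgue] U
      equivolume_cell(3)[OF n] mU by auto
  have "{0<..<Inf (A n)} \<subseteq> (\<Union>n'\<in>S. A n')"
  proof
    fix x assume x: "x \<in> {0<..<Inf (A n)}"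
    have "Inf (A n) \<le> 1" using equivolume_cell(4)[OF n] N by (smt (verit) divide_nonneg_nonneg of_nat_0_le_iff)
    hence "x \<in> (\<Union>n<N. A n)" using x unfolding equivolume_cover by auto
    then obtain n' where n': "n' < N" "x \<in> A n'" by auto
    have "Inf (A n') \<le> x" using equivolume_cell(2)[OF n'(1)] n'(2) by auto
    thus "x \<in> (\<Union>n'\<in>S. A n')" using n' x unfolding S_def by auto
  qed
  hence le2: "Inf (A n) \<le> card S / N"
    using measure_mono_fmeasurable[of "{0<..<Inf (A n)}" "\<Union>n'\<in>S. A n'" lebesgue] U
      equivolume_cell(3)[OF n] mU by auto
  show ?thesis using le1 le2 unfolding S_def by linarith
qed

theorem equivolume_partition_grid:
  "\<exists>\<sigma>. bij_betw \<sigma> {..<N} {..<N} \<and>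
    (\<forall>n<N. {real (\<sigma> n)/N<..<real (Suc (\<sigma> n))/N} \<subseteq> A n \<and> A n \<subseteq> grid_cell N (\<sigma> n))"
proof -
  define \<sigma> where "\<sigma> n = card {n'. n' < N \<and> Inf (A n') < Inf (A n)}" for n
  have \<sigma>lt: "\<sigma> n < N" if n: "n < N" for n
  proof -
    have "{n'. n' < N \<and> Inf (A n') < Inf (A n)} \<subseteq> {..<N} - {n}" by auto
    hence "\<sigma> n \<le> card ({..<N} - {n})" unfolding \<sigma>_def by (intro card_mono) auto
    thus ?thesis using n N by simp
  qed
  have left: "Inf (A n) = real (\<sigma> n) / N" if "n < N" for n
    using equivolume_left_end_rank[OF that] unfolding \<sigma>_def .
  have "inj_on \<sigma> {..<N}"
  proof (rule inj_onI)
    fix n n' assume "n \<in> {..<N}" "n' \<in> {..<N}" "\<sigma> n = \<sigma> n'"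
    thus "n = n'" using left inj_onD[OF equivolume_left_ends_inj] by fastforce
  qed
  hence bij: "bij_betw \<sigma> {..<N} {..<N}"
    unfolding bij_betw_def using \<sigma>lt endo_inj_surj[of "{..<N}" \<sigma>] by auto
  have suc: "real (Suc (\<sigma> n)) / N = Inf (A n) + 1/N" if "n < N" for n
    using left[OF that] by (simp add: add_divide_distrib)
  have "{real (\<sigma> n)/N<..<real (Suc (\<sigma> n))/N} \<subseteq> A n \<and> A n \<subseteq> grid_cell N (\<sigma> n)" if "n < N" for n
    unfolding grid_cell_def suc[OF that] left[OF that, symmetric] using equivolume_cell(1,2)[OF that] by blast
  thus ?thesis using bij by blast
qed

end

section \<open>Mass of grid cells under affine maps\<close>

definition overlap :: "real \<Rightarrow> real \<Rightarrow> real \<Rightarrow> real \<Rightarrow> real" where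
  "overlap a b c d = max 0 (min b d - max a c)"

lemma measure_affine_preimage:
  fixes \<alpha> \<beta> U V :: real
  assumes "\<alpha> \<noteq> 0"
  shows "measure lebesgue {x. U \<le> \<alpha>*x + \<beta> \<and> \<alpha>*x + \<beta> \<le> V} = max 0 (V - U) / \<bar>\<alpha>\<bar>"
proof (cases "\<alpha> > 0")
  case True
  have "{x. U \<le> \<alpha>*x + \<beta> \<and> \<alpha>*x + \<beta> \<le> V} = {(U-\<beta>)/\<alpha>..(V-\<beta>)/\<alpha>}"
    using True by (auto simp: field_simps)
  moreover have "(U-\<beta>)/\<alpha> \<le> (V-\<beta>)/\<alpha> \<longleftrightarrow> U \<le> V" using True by (simp add: divide_le_cancel)
  ultimately show ?thesis using True by (auto simp: field_simps max_def)
next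
  case False
  hence a: "\<alpha> < 0" using assms by simp
  have "{x. U \<le> \<alpha>*x + \<beta> \<and> \<alpha>*x + \<beta> \<le> V} = {(V-\<beta>)/\<alpha>..(U-\<beta>)/\<alpha>}"
    using a by (auto simp: field_simps)
  moreover have "(V-\<beta>)/\<alpha> \<le> (U-\<beta>)/\<alpha> \<longleftrightarrow> U \<le> V" using a by (simp add: divide_le_cancel)
  ultimately show ?thesis using a by (auto simp: field_simps max_def)
qed

lemma mem_grid_cell:
  assumes "N > 0"
  shows "y \<in> grid_cell N k \<longleftrightarrow> real k \<le> N*y \<and> N*y \<le> real k + 1"
  using assms by (auto simp: grid_cell_def field_simps)

lemma grid_cell_affine_iff:
  fixes \<alpha> \<beta> x :: real and N i :: nat
  assumes N: "N > 0" and \<alpha>: "\<alpha> \<noteq> 0"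
  shows "x \<in> grid_cell N i \<longleftrightarrow>
    real N * \<beta> + min (\<alpha> * real i) (\<alpha> * (real i + 1)) \<le> (N*\<alpha>)*x + N*\<beta> \<and>
    (N*\<alpha>)*x + N*\<beta> \<le> real N * \<beta> + max (\<alpha> * real i) (\<alpha> * (real i + 1))"
proof -
  have eq: "(N*\<alpha>)*x + N*\<beta> = \<alpha>*(N*x) + N*\<beta>" by (simp add: algebra_simps)
  show ?thesis
  proof (cases "\<alpha> > 0")
    case True
    hence "min (\<alpha> * real i) (\<alpha> * (real i + 1)) = \<alpha> * real i"
      "max (\<alpha> * real i) (\<alpha> * (real i + 1)) = \<alpha> * (real i + 1)" by auto
    thus ?thesis unfolding mem_grid_cell[OF N] eq using True by (simp add: mult_le_cancel_left_pos add.commute)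
  next
    case False
    hence neg: "\<alpha> < 0" using \<alpha> by simp
    hence "min (\<alpha> * real i) (\<alpha> * (real i + 1)) = \<alpha> * (real i + 1)"
      "max (\<alpha> * real i) (\<alpha> * (real i + 1)) = \<alpha> * real i" by auto
    thus ?thesis unfolding mem_grid_cell[OF N] eq using neg by (auto simp: mult_le_cancel_left_neg)
  qed
qed

lemma affine_cell_mass:
  fixes g :: "real \<Rightarrow> real" and \<alpha> \<beta> :: real and N i j :: nat
  assumes N: "N > 0" and \<alpha>: "\<alpha> \<noteq> 0"
    and g: "\<And>x. x \<in> grid_cell N i \<Longrightarrow> g x = \<alpha> * x + \<beta>"
  shows "real N * measure lebesgue (g -` grid_cell N j \<inter> grid_cell N i)
       = overlap (real N * \<beta> + min (\<alpha> * real i) (\<alpha> * (real i + 1)))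
           (real N * \<beta> + max (\<alpha> * real i) (\<alpha> * (real i + 1))) (real j) (real j + 1) / \<bar>\<alpha>\<bar>"
proof -
  have Nr: "real N > 0" using N by simp
  define lo where "lo = real N * \<beta> + min (\<alpha> * real i) (\<alpha> * (real i + 1))"
  define hi where "hi = real N * \<beta> + max (\<alpha> * real i) (\<alpha> * (real i + 1))"
  have cell: "x \<in> grid_cell N i \<longleftrightarrow> lo \<le> (N*\<alpha>)*x + N*\<beta> \<and> (N*\<alpha>)*x + N*\<beta> \<le> hi" for x :: real
    unfolding lo_def hi_def by (rule grid_cell_affine_iff[OF N \<alpha>])
  have "g -` grid_cell N j \<inter> grid_cell N i
      = {x. max lo j \<le> (N*\<alpha>)*x + N*\<beta> \<and> (N*\<alpha>)*x + N*\<beta> \<le> min hi (j+1)}"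
  proof (intro set_eqI)
    fix x
    show "x \<in> g -` grid_cell N j \<inter> grid_cell N i \<longleftrightarrow>
          x \<in> {x. max lo j \<le> (N*\<alpha>)*x + N*\<beta> \<and> (N*\<alpha>)*x + N*\<beta> \<le> min hi (j+1)}"
    proof (cases "x \<in> grid_cell N i")
      case True
      hence "N * g x = (N*\<alpha>)*x + N*\<beta>" using g by (simp add: algebra_simps)
      thus ?thesis using True cell[of x] mem_grid_cell[OF N, of "g x" j] by auto
    qed (use cell in auto)
  qed
  hence "measure lebesgue (g -` grid_cell N j \<inter> grid_cell N i) = max 0 (min hi (j+1) - max lo j) / \<bar>N*\<alpha>\<bar>"
    using measure_affine_preimage[of "N*\<alpha>" "max lo j" "N*\<beta>" "min hi (j+1)"] \<alpha> Nr by simp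
  thus ?thesis using Nr unfolding overlap_def lo_def hi_def by (simp add: abs_mult ac_simps)
qed

lemma sum_overlap:
  assumes "0 \<le> a" "a \<le> b"
  shows "(\<Sum>j<n. overlap a b (real j) (real j + 1)) = max 0 (min b (real n) - a)"
proof (induction n)
  case (Suc n)
  have "(\<Sum>j<Suc n. overlap a b (real j) (real j + 1)) = max 0 (min b (real n) - a) + overlap a b (real n) (real n + 1)"
    using Suc by simp
  also have "\<dots> = max 0 (min b (real n + 1) - a)"
    unfolding overlap_def using assms by (auto simp: max_def min_def)
  finally show ?case by simp
qed (use assms in \<open>simp add: max_def min_def\<close>)

lemma phi_overlap:
  fixes \<theta> s :: real and j :: nat
  assumes s: "s > 1" and t0: "\<theta> \<ge> 0"
  defines "A \<equiv> nat \<lfloor>\<theta>\<rfloor>" and "B \<equiv> nat \<lfloor>\<theta> + s\<rfloor>"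
  shows "phi (overlap \<theta> (\<theta>+s) (real j) (real j + 1)) =
    (if j = A then phi (1 - frac \<theta>) else 0) + (if j = B then phi (frac (\<theta> + s)) else 0)"
proof -
  have A: "real A \<le> \<theta>" "\<theta> < real A + 1" using t0 unfolding A_def by linarith+
  have B: "real B \<le> \<theta> + s" "\<theta> + s < real B + 1" using t0 s unfolding B_def by linarith+
  have fA: "frac \<theta> = \<theta> - real A" using t0 unfolding A_def frac_def by simp
  have fB: "frac (\<theta>+s) = \<theta> + s - real B" using t0 s unfolding B_def frac_def by simp
  have AB: "A < B" using A B s by linarith
  consider "j < A" | "j = A" | "A < j \<and> j < B" | "j = B" | "B < j" by linarith
  thus ?thesis
  proof cases
    case 1
    hence "overlap \<theta> (\<theta>+s) (real j) (real j + 1) = 0" unfolding overlap_def using A by (auto simp: max_def min_def)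
    thus ?thesis using 1 AB by simp
  next
    case 2
    hence "overlap \<theta> (\<theta>+s) (real j) (real j + 1) = 1 - frac \<theta>" unfolding overlap_def fA using A s by (auto simp: max_def min_def)
    thus ?thesis using 2 AB by simp
  next
    case 3
    hence "real A + 1 \<le> real j" "real j + 1 \<le> real B" by linarith+
    hence "overlap \<theta> (\<theta>+s) (real j) (real j + 1) = 1" unfolding overlap_def using A B by (auto simp: max_def min_def)
    thus ?thesis using 3 by simp
  next
    case 4
    hence "real A + 1 \<le> real j" using AB by linarith
    hence "overlap \<theta> (\<theta>+s) (real j) (real j + 1) = frac (\<theta> + s)" unfolding overlap_def fB using A B 4 by (auto simp: max_def min_def)
    thus ?thesis using 4 AB by simp
  next
    case 5
    hence "real B + 1 \<le> real j" by linarith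
    hence "overlap \<theta> (\<theta>+s) (real j) (real j + 1) = 0" unfolding overlap_def using B by (auto simp: max_def min_def)
    thus ?thesis using 5 AB by simp
  qed
qed

text \<open>Entropy of a row whose image interval [theta, theta + s] is spread uniformly (density 1/s)
  over the unit cells: ln s from the spreading, plus the two partial edge cells.\<close>
lemma row_entropy_formula:
  fixes \<theta> s :: real and N :: nat
  assumes s: "s > 1" and t0: "\<theta> \<ge> 0" and tN: "\<theta> + s \<le> real N"
  shows "(\<Sum>j<N. phi (overlap \<theta> (\<theta>+s) (real j) (real j + 1) / s))
       = ln s + (phi (1 - frac \<theta>) + phi (frac (\<theta> + s))) / s"
proof -
  define A where "A = nat \<lfloor>\<theta>\<rfloor>"
  define B where "B = nat \<lfloor>\<theta> + s\<rfloor>"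
  have AN: "A < N" using t0 s tN unfolding A_def by linarith
  have last: "(if B < N then phi (frac (\<theta> + s)) else 0) = phi (frac (\<theta> + s))"
  proof (cases "B < N")
    case False
    hence "\<theta> + s = real N" using tN t0 s unfolding B_def by linarith
    hence "frac (\<theta> + s) = 0" by simp
    thus ?thesis using False by (simp del: frac_eq_0_iff)
  qed simp
  have edges: "(\<Sum>j<N. phi (overlap \<theta> (\<theta>+s) (real j) (real j + 1))) = phi (1 - frac \<theta>) + phi (frac (\<theta> + s))"
    using AN last by (simp add: phi_overlap[OF s t0] sum.distrib flip: A_def B_def)
  have total: "(\<Sum>j<N. overlap \<theta> (\<theta>+s) (real j) (real j + 1)) = s"
    using sum_overlap[of \<theta> "\<theta>+s" N] t0 s tN by simp
  have "(\<Sum>j<N. phi (overlap \<theta> (\<theta>+s) (real j) (real j + 1) / s)) =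
        (\<Sum>j<N. (overlap \<theta> (\<theta>+s) (real j) (real j + 1) / s) * ln s + phi (overlap \<theta> (\<theta>+s) (real j) (real j + 1)) / s)"
    by (rule sum.cong[OF refl]) (use phi_scale s in \<open>auto simp: overlap_def\<close>)
  also have "\<dots> = (\<Sum>j<N. overlap \<theta> (\<theta>+s) (real j) (real j + 1)) / s * ln s + (\<Sum>j<N. phi (overlap \<theta> (\<theta>+s) (real j) (real j + 1))) / s"
    by (simp add: sum.distrib sum_divide_distrib sum_distrib_right)
  also have "\<dots> = ln s + (phi (1 - frac \<theta>) + phi (frac (\<theta> + s))) / s"
    using edges total s by simp
  finally show ?thesis .
qed

section \<open>The skew tent map\<close>

text \<open>The skew tent map with slopes m and -l; the condition 1/m + 1/l = 1 makes it map [0,1] onto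
  itself with turning point 1/m.\<close>
locale skew_tent =
  fixes m l :: real
  assumes m1: "m > 1" and l1: "l > 1" and ml: "1/m + 1/l = 1"
begin

definition T :: "real \<Rightarrow> real" where "T x = min (m*x) (l*(1-x))"

lemma m0: "m > 0" and l0: "l > 0" using m1 l1 by auto

lemma inverse_l: "1/l = 1 - 1/m" using ml by simp

lemma l_turning: "l * (1 - 1/m) = 1"
  using l0 by (simp flip: inverse_l)

text \<open>The two branches meet at the turning point 1/m, where both take the value 1.\<close>
lemma T_eq: "(\<lambda>x. if x \<le> 1/m then m*x else l*(1-x)) = T"
proof
  fix x
  have "m*x \<le> 1 \<longleftrightarrow> x \<le> 1/m" using m0 by (simp add: field_simps)
  moreover have "l*(1-x) \<ge> 1 \<longleftrightarrow> x \<le> 1/m"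
    using l0 l_turning mult_le_cancel_left_pos[OF l0, of "1 - 1/m" "1 - x"] by auto
  ultimately show "(if x \<le> 1/m then m*x else l*(1-x)) = T x" by (auto simp: T_def)
qed

lemma T_left: "x \<le> 1/m \<Longrightarrow> T x = m*x"
  using fun_cong[OF T_eq, of x] by simp

lemma T_right: "x \<ge> 1/m \<Longrightarrow> T x = l*(1-x)"
  using fun_cong[OF T_eq, of x] T_left[of x] l_turning m0 by (cases "x = 1/m") auto

lemma T_continuous: "continuous_on UNIV T"
  unfolding T_def by (intro continuous_intros)

lemma T_fibre: "T -` {y} \<subseteq> {y/m, 1 - y/l}"
proof
  fix x assume "x \<in> T -` {y}"
  hence "m*x = y \<or> l*(1-x) = y" by (auto simp: T_def min_def split: if_splits)
  thus "x \<in> {y/m, 1 - y/l}" using m0 l0 by (auto simp: field_simps)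
qed

lemma deriv_T: "x \<noteq> 1/m \<Longrightarrow> deriv T x = (if x < 1/m then m else - l)"
proof (cases "x < 1/m")
  case True
  have "eventually (\<lambda>y. y \<in> {..<1/m}) (nhds x)" using True by (intro eventually_nhds_in_open) auto
  hence ev: "eventually (\<lambda>y. T y = m * y) (nhds x)" by eventually_elim (simp add: T_left)
  have "((\<lambda>y. m * y) has_real_derivative m) (at x)" by (auto intro!: derivative_eq_intros)
  hence "(T has_real_derivative m) (at x)" using DERIV_cong_ev[OF refl ev refl] by simp
  thus ?thesis using True by (simp add: DERIV_imp_deriv)
next
  case False
  assume "x \<noteq> 1/m"
  hence "x > 1/m" using False by simp
  hence "eventually (\<lambda>y. y \<in> {1/m<..}) (nhds x)" by (intro eventually_nhds_in_open) auto
  hence ev: "eventually (\<lambda>y. T y = l * (1 - y)) (nhds x)" by eventually_elim (simp add: T_right)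
  have "((\<lambda>y. l * (1 - y)) has_real_derivative (l * (0 - 1))) (at x)" by (auto intro!: derivative_eq_intros)
  hence "(T has_real_derivative (- l)) (at x)" using DERIV_cong_ev[OF refl ev refl] by simp
  thus ?thesis using False by (simp add: DERIV_imp_deriv)
qed

text \<open>ln |T'| is ln m on [0,1/m) and ln l on (1/m,1]; the intervals have lengths 1/m and 1/l.\<close>
theorem lyap_T: "lyap T = (1/m) * ln m + (1/l) * ln l"
proof -
  define h where "h x = (if x \<le> 1/m then ln m else ln l)" for x
  have mi: "0 \<le> 1/m" "1/m \<le> 1" using m1 by auto
  have "integral {0..1} (\<lambda>x. ln \<bar>deriv T x\<bar>) = integral {0..1} h"
  proof (rule integral_spike[of "{1/m}"])
    fix x assume "x \<in> {0..1} - {1/m}"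
    thus "h x = ln \<bar>deriv T x\<bar>" using deriv_T[of x] m0 l0 by (auto simp: h_def)
  qed auto
  moreover have "(h has_integral ((1/m) * ln m + (1/l) * ln l)) {0..1}"
  proof -
    have a: "(h has_integral ((1/m) * ln m)) {0..1/m}"
    proof (rule has_integral_spike_finite[of "{}"])
      show "((\<lambda>x. ln m) has_integral ((1/m) * ln m)) {0..1/m}"
        using has_integral_const_real[of "ln m" 0 "1/m"] mi by simp
    qed (auto simp: h_def)
    have b: "(h has_integral ((1/l) * ln l)) {1/m..1}"
    proof (rule has_integral_spike_finite[of "{1/m}"])
      show "((\<lambda>x. ln l) has_integral ((1/l) * ln l)) {1/m..1}"
        using has_integral_const_real[of "ln l" "1/m" 1] mi by (simp add: inverse_l)
    qed (auto simp: h_def)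
    show ?thesis using has_integral_combine[OF mi a b] by simp
  qed
  ultimately show ?thesis unfolding lyap_def by (simp add: integral_unique)
qed

definition grid_mass :: "nat \<Rightarrow> nat \<Rightarrow> nat \<Rightarrow> real" where
  "grid_mass N i j = measure lebesgue (T -` grid_cell N j \<inter> grid_cell N i)"

definition H_grid :: "nat \<Rightarrow> real" where
  "H_grid N = (\<Sum>i<N. \<Sum>j<N. (1 / real N) * phi (real N * grid_mass N i j))"

text \<open>Since T is continuous with finite fibres, changing the cells at their endpoints changes
  T^-1(A') \<inter> A only by finitely many points.\<close>
lemma preimage_mass_ignores_endpoints:
  assumes A: "{a<..<b} \<subseteq> A" "A \<subseteq> {a..b}" and A': "{a'<..<b'} \<subseteq> A'" "A' \<subseteq> {a'..b'}"
  shows "measure lebesgue (T -` A' \<inter> A) = measure lebesgue (T -` {a'..b'} \<inter> {a..b})"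
proof -
  define C where "C = T -` {a'..b'} \<inter> {a..b}"
  have Cc: "closed C" unfolding C_def by (intro closed_Int closed_vimage T_continuous) auto
  have sub: "T -` A' \<inter> A \<subseteq> C" using A A' unfolding C_def by auto
  have "C - (T -` A' \<inter> A) \<subseteq> {a, b} \<union> (T -` {a'} \<union> T -` {b'})"
    using A A' unfolding C_def by (force simp: less_le)
  also have "\<dots> \<subseteq> {a, b, a'/m, 1 - a'/l, b'/m, 1 - b'/l}" using T_fibre by blast
  finally have "finite (C - (T -` A' \<inter> A))" by (rule finite_subset) simp
  hence null: "C - (T -` A' \<inter> A) \<in> null_sets lebesgue"
    using negligible_finite negligible_iff_null_sets by blast
  have "C \<in> sets lebesgue" using Cc by (simp add: borel_closed)
  have "T -` A' \<inter> A = C - (C - (T -` A' \<inter> A))" using sub by blast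
  hence "measure lebesgue (T -` A' \<inter> A) = measure lebesgue (C - (C - (T -` A' \<inter> A)))" by simp
  also have "\<dots> = measure lebesgue C" by (rule measure_Diff_null_set[OF \<open>C \<in> sets lebesgue\<close> null])
  finally show ?thesis unfolding C_def .
qed

theorem H_part_eq_H_grid:
  assumes ep: "equivolume_partition N A" and N: "N \<ge> 1"
  shows "H_part N A T = H_grid N"
proof -
  obtain \<sigma> where bij: "bij_betw \<sigma> {..<N} {..<N}" and
    sw: "\<And>n. n < N \<Longrightarrow> {real (\<sigma> n)/N<..<real (Suc (\<sigma> n))/N} \<subseteq> A n \<and> A n \<subseteq> grid_cell N (\<sigma> n)"
    using equivolume_partition_grid[OF ep N] by blast
  have tp: "trans_prob N A T n n' = real N * grid_mass N (\<sigma> n) (\<sigma> n')" if "n < N" "n' < N" for n n'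
    using preimage_mass_ignores_endpoints sw[OF that(1)] sw[OF that(2)]
    unfolding trans_prob_def grid_mass_def grid_cell_def by simp
  have "H_part N A T = (\<Sum>n<N. \<Sum>n'<N. (1 / real N) * phi (real N * grid_mass N (\<sigma> n) (\<sigma> n')))"
    unfolding H_part_def by (intro sum.cong refl) (simp add: tp)
  also have "\<dots> = (\<Sum>n<N. \<Sum>j<N. (1 / real N) * phi (real N * grid_mass N (\<sigma> n) j))"
    by (intro sum.cong refl sum.reindex_bij_betw[OF bij])
  also have "\<dots> = H_grid N"
    unfolding H_grid_def
    by (rule sum.reindex_bij_betw[OF bij, where g="\<lambda>i. \<Sum>j<N. (1 / real N) * phi (real N * grid_mass N i j)"])
  finally show ?thesis .
qed

lemma grid_mass_left:
  assumes N: "N > 0" and i: "real (Suc i) * m \<le> real N"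
  shows "real N * grid_mass N i j = overlap (m * real i) (m * real i + m) (real j) (real j + 1) / m"
proof -
  have "T x = m * x + 0" if "x \<in> grid_cell N i" for x
  proof -
    have "x \<le> real (Suc i) / N" using that by (simp add: grid_cell_def)
    also have "\<dots> \<le> 1/m" using i N m0 by (simp add: field_simps)
    finally show ?thesis by (simp add: T_left)
  qed
  hence "real N * grid_mass N i j = overlap (real N * 0 + min (m * real i) (m * (real i + 1)))
      (real N * 0 + max (m * real i) (m * (real i + 1))) (real j) (real j + 1) / \<bar>m\<bar>"
    unfolding grid_mass_def using m0 by (intro affine_cell_mass[OF N]) auto
  moreover have "min (m * real i) (m * (real i + 1)) = m * real i"
    "max (m * real i) (m * (real i + 1)) = m * real i + m"
    using m0 by (auto simp: algebra_simps)
  ultimately show ?thesis using m0 by simp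
qed

text \<open>A row inside the right branch, counted from the right end as k = N - 1 - i, is mapped by
  x |-> l (1 - x) onto [l k, l k + l] / N.\<close>
lemma grid_mass_right:
  assumes N: "N > 0" and iN: "i < N" and i: "real N \<le> m * real i"
  shows "real N * grid_mass N i j = overlap (l * real (N - 1 - i)) (l * real (N - 1 - i) + l) (real j) (real j + 1) / l"
proof -
  have "T x = (- l) * x + l" if "x \<in> grid_cell N i" for x
  proof -
    have "1/m \<le> real i / N" using i N m0 by (simp add: field_simps)
    also have "\<dots> \<le> x" using that by (simp add: grid_cell_def)
    finally show ?thesis by (simp add: T_right algebra_simps)
  qed
  hence "real N * grid_mass N i j = overlap (real N * l + min (- l * real i) (- l * (real i + 1)))
      (real N * l + max (- l * real i) (- l * (real i + 1))) (real j) (real j + 1) / \<bar>- l\<bar>"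
    unfolding grid_mass_def using l0 by (intro affine_cell_mass[OF N]) auto
  moreover have "real (N - 1 - i) = real N - 1 - real i" using iN by (simp add: of_nat_diff)
  hence "real N * l + min (- l * real i) (- l * (real i + 1)) = l * real (N - 1 - i)"
    "real N * l + max (- l * real i) (- l * (real i + 1)) = l * real (N - 1 - i) + l"
    using l0 by (auto simp: algebra_simps)
  ultimately show ?thesis using l0 by simp
qed

lemma grid_mass_bounds:
  assumes N: "N > 0"
  shows "0 \<le> real N * grid_mass N i j" "real N * grid_mass N i j \<le> 1"
proof -
  show "0 \<le> real N * grid_mass N i j" unfolding grid_mass_def by simp
  have cl: "closed (T -` grid_cell N j \<inter> grid_cell N i)"
    unfolding grid_cell_def by (intro closed_Int closed_vimage T_continuous) auto
  have "grid_mass N i j \<le> measure lebesgue (grid_cell N i)"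
    unfolding grid_mass_def by (rule measure_mono_fmeasurable) (use cl in \<open>auto simp: grid_cell_def borel_closed\<close>)
  also have "\<dots> = 1 / N" using N by (simp add: grid_cell_def field_simps)
  finally show "real N * grid_mass N i j \<le> 1" using N by (simp add: field_simps)
qed

text \<open>The row containing the turning point 1/m is mapped into [1 - (m + l)/N, 1], so it only
  meets the last m + l + 1 columns.\<close>
lemma grid_mass_turning_row:
  assumes N: "N > 0" and i1: "m * real i < real N" and i2: "real N < m * real (Suc i)"
    and j: "real j + 1 + m + l \<le> real N"
  shows "grid_mass N i j = 0"
proof -
  have Nr: "real N > 0" using N by simp
  have "T x > 1 - (m + l) / N" if x: "x \<in> grid_cell N i" for x
  proof -
    have "m * x \<ge> m * (real i / N)" using x m0 by (intro mult_left_mono) (auto simp: grid_cell_def)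
    moreover have "m * (real i / N) > 1 - m / N"
    proof -
      have "(real N - m) / N < (m * real i) / N" using i2 Nr by (intro divide_strict_right_mono) (auto simp: algebra_simps)
      thus ?thesis using Nr by (simp add: diff_divide_distrib)
    qed
    moreover have "l * (1 - x) \<ge> l * (1 - real (Suc i) / N)"
      using x l0 by (intro mult_left_mono) (auto simp: grid_cell_def)
    moreover have "l * (1 - real (Suc i) / N) > l * (1 - 1/m - 1/N)"
      using i1 Nr m0 l0 by (intro mult_strict_left_mono) (auto simp: field_simps)
    moreover have "l * (1 - 1/m - 1/N) = 1 - l/N" using l_turning by (simp add: algebra_simps)
    moreover have "m / N \<le> (m + l) / N" "l / N \<le> (m + l) / N"
      using Nr m0 l0 by (simp_all add: divide_right_mono)
    ultimately show ?thesis unfolding T_def by linarith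
  qed
  moreover have "real (Suc j) / N \<le> 1 - (m + l) / N"
  proof -
    have "real (Suc j) / N \<le> (real N - (m + l)) / N" using j Nr by (intro divide_right_mono) auto
    thus ?thesis using Nr by (simp add: diff_divide_distrib)
  qed
  ultimately have "T -` grid_cell N j \<inter> grid_cell N i = {}"
    unfolding grid_cell_def by fastforce
  thus ?thesis unfolding grid_mass_def by simp
qed

text \<open>Entropy contributed by the row i, and the edge entropy of the k-th row of a branch of
  slope s (the two partially covered cells at the ends of its image).\<close>
definition row_entropy :: "nat \<Rightarrow> nat \<Rightarrow> real" where
  "row_entropy N i = (\<Sum>j<N. (1 / real N) * phi (real N * grid_mass N i j))"

definition edge_entropy :: "real \<Rightarrow> nat \<Rightarrow> real" where
  "edge_entropy s k = phi (1 - frac (s * real k)) + phi (frac (s * real k + s))"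

text \<open>Rows 0 .. left_rows N - 1 lie in the left branch, rows right_start N .. N - 1 in the right
  branch; at most one row lies in between.\<close>
definition left_rows :: "nat \<Rightarrow> nat" where "left_rows N = nat \<lfloor>real N / m\<rfloor>"
definition right_start :: "nat \<Rightarrow> nat" where "right_start N = nat \<lceil>real N / m\<rceil>"

lemma right_start_real: "real (right_start N) = of_int \<lceil>real N / m\<rceil>"
proof -
  have "-1 < real N / m" using m0 by (smt (verit) divide_nonneg_pos of_nat_0_le_iff)
  thus ?thesis unfolding right_start_def by simp
qed

lemma left_rows_real: "real (left_rows N) = of_int \<lfloor>real N / m\<rfloor>"
  using m0 unfolding left_rows_def by simp

lemma row_ranges: "left_rows N \<le> right_start N" "right_start N \<le> N" "right_start N \<le> left_rows N + 1"
proof -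
  have "real N * 1 \<le> real N * m" using m1 by (intro mult_left_mono) auto
  hence "real N / m \<le> real N" using m0 by (simp add: divide_le_eq)
  thus "right_start N \<le> N" unfolding right_start_def by (simp add: nat_le_iff ceiling_le_iff)
  show "left_rows N \<le> right_start N"
    unfolding left_rows_def right_start_def by (simp add: nat_mono floor_le_ceiling)
  have "\<lceil>real N / m\<rceil> \<le> \<lfloor>real N / m\<rfloor> + 1" by (simp add: ceiling_le_iff)
  thus "right_start N \<le> left_rows N + 1" unfolding left_rows_def right_start_def using m0 by (simp add: nat_le_iff)
qed

lemma row_entropy_left:
  assumes N: "N > 0" and i: "i < left_rows N"
  shows "row_entropy N i = (ln m + edge_entropy m i / m) / N"
proof -
  have "real (Suc i) \<le> real N / m" using i unfolding left_rows_def by linarith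
  hence i': "real (Suc i) * m \<le> real N" using m0 by (simp add: field_simps)
  have "row_entropy N i = (1 / real N) * (\<Sum>j<N. phi (overlap (m * real i) (m * real i + m) (real j) (real j + 1) / m))"
    unfolding row_entropy_def by (simp add: grid_mass_left[OF N i'] sum_distrib_left)
  also have "(\<Sum>j<N. phi (overlap (m * real i) (m * real i + m) (real j) (real j + 1) / m)) = ln m + edge_entropy m i / m"
    unfolding edge_entropy_def by (rule row_entropy_formula[OF m1]) (use m0 i' in \<open>auto simp: algebra_simps\<close>)
  finally show ?thesis by simp
qed

lemma row_entropy_right:
  assumes N: "N > 0" and i1: "right_start N \<le> i" and i2: "i < N"
  shows "row_entropy N i = (ln l + edge_entropy l (N - 1 - i) / l) / N"
proof -
  have i: "real N / m \<le> real i" using i1 unfolding right_start_def by linarith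
  hence i': "real N \<le> m * real i" using m0 by (simp add: field_simps)
  have "l * real (N - 1 - i) + l = l * (real N - real i)" using i2 by (simp add: of_nat_diff algebra_simps)
  also have "\<dots> \<le> l * (real N - real N / m)" using i l0 by (intro mult_left_mono) auto
  also have "\<dots> = real N * (l * (1 - 1/m))" by (simp add: algebra_simps)
  also have "\<dots> = real N" using l_turning by simp
  finally have bnd: "l * real (N - 1 - i) + l \<le> real N" .
  have "row_entropy N i = (1 / real N) * (\<Sum>j<N. phi (overlap (l * real (N - 1 - i)) (l * real (N - 1 - i) + l) (real j) (real j + 1) / l))"
    unfolding row_entropy_def by (simp add: grid_mass_right[OF N i2 i'] sum_distrib_left)
  also have "(\<Sum>j<N. phi (overlap (l * real (N - 1 - i)) (l * real (N - 1 - i) + l) (real j) (real j + 1) / l))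
      = ln l + edge_entropy l (N - 1 - i) / l"
    unfolding edge_entropy_def by (rule row_entropy_formula[OF l1]) (use l0 bnd in auto)
  finally show ?thesis by simp
qed

lemma row_entropy_turning:
  assumes N: "N > 0" and i1: "left_rows N \<le> i" and i2: "i < right_start N"
  shows "0 \<le> row_entropy N i" "row_entropy N i \<le> (m + l + 2) / N"
proof -
  have Nr: "real N > 0" using N by simp
  have "real i < real N / m" using i2 unfolding right_start_def by linarith
  hence im1: "m * real i < real N" using m0 by (simp add: field_simps)
  have "real N / m < real i + 1" using i1 unfolding left_rows_def by linarith
  hence im2: "real N < m * real (Suc i)" using m0 by (simp add: field_simps)
  have bnd: "0 \<le> real N * grid_mass N i j" "real N * grid_mass N i j \<le> 1" for j using grid_mass_bounds[OF N] by auto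
  show "0 \<le> row_entropy N i" unfolding row_entropy_def using bnd phi_ge0 Nr by (intro sum_nonneg mult_nonneg_nonneg) auto
  define K where "K = nat \<lceil>m + l\<rceil> + 1"
  have "real (nat \<lceil>m + l\<rceil>) = of_int \<lceil>m + l\<rceil>" using m0 l0 by simp
  hence K: "m + l + 1 \<le> real K" "real K \<le> m + l + 2" unfolding K_def by linarith+
  have "phi (real N * grid_mass N i j) = 0" if "j < N - K" for j
    using grid_mass_turning_row[OF N im1 im2, of j] that K by simp
  hence "(\<Sum>j<N. phi (real N * grid_mass N i j)) = (\<Sum>j\<in>{N - K..<N}. phi (real N * grid_mass N i j))"
    by (intro sum.mono_neutral_right) auto
  also have "\<dots> \<le> of_nat (card {N - K..<N}) * 1"
    by (rule sum_bounded_above) (use phi_le1 bnd in auto)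
  also have "\<dots> \<le> m + l + 2" using K by simp
  finally have "(\<Sum>j<N. phi (real N * grid_mass N i j)) / N \<le> (m + l + 2) / N"
    using Nr by (intro divide_right_mono) auto
  thus "row_entropy N i \<le> (m + l + 2) / N"
    unfolding row_entropy_def by (simp add: sum_divide_distrib)
qed

lemma H_grid_decomposition:
  assumes N: "N > 0"
  shows "H_grid N = (real (left_rows N) / N) * (ln m + cesaro_mean (edge_entropy m) (left_rows N) / m)
     + (real (N - right_start N) / N) * (ln l + cesaro_mean (edge_entropy l) (N - right_start N) / l)
     + (\<Sum>i\<in>{left_rows N..<right_start N}. row_entropy N i)"
proof -
  have "H_grid N = (\<Sum>i\<in>{0..<N}. row_entropy N i)"
    unfolding H_grid_def row_entropy_def by (simp add: atLeast0LessThan)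
  also have "\<dots> = (\<Sum>i\<in>{0..<left_rows N}. row_entropy N i) + (\<Sum>i\<in>{left_rows N..<right_start N}. row_entropy N i)
      + (\<Sum>i\<in>{right_start N..<N}. row_entropy N i)"
    using row_ranges[of N] by (simp add: sum.atLeastLessThan_concat)
  also have "(\<Sum>i\<in>{0..<left_rows N}. row_entropy N i) = (\<Sum>i<left_rows N. (ln m + edge_entropy m i / m)) / N"
    by (simp add: atLeast0LessThan row_entropy_left[OF N] sum_divide_distrib)
  also have "(\<Sum>i\<in>{right_start N..<N}. row_entropy N i) = (\<Sum>i\<in>{right_start N..<N}. (ln l + edge_entropy l (N - 1 - i) / l) / N)"
    by (rule sum.cong[OF refl]) (use row_entropy_right[OF N] in auto)
  also have "\<dots> = (\<Sum>k<N - right_start N. (ln l + edge_entropy l k / l)) / N"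
    unfolding sum_divide_distrib[symmetric]
    by (rule arg_cong[where f="\<lambda>x. x / real N"], rule sum.reindex_bij_witness[where i="\<lambda>k. N - 1 - k" and j="\<lambda>i. N - 1 - i"]) auto
  finally show ?thesis unfolding sum_as_cesaro_mean by simp
qed

lemma left_rows_proportion: "(\<lambda>N. real (left_rows N) / real N) \<longlonglongrightarrow> 1/m"
proof (rule lim_by_bound[where C=1])
  fix N :: nat assume N: "N \<ge> 1"
  hence Nr: "real N > 0" by simp
  have a: "real (left_rows N) \<le> real N / m" "real N / m - 1 < real (left_rows N)"
    unfolding left_rows_real by linarith+
  have "real (left_rows N) / N \<le> 1/m" using a(1) Nr m0 by (simp add: field_simps)
  moreover have "(real N / m - 1) / N < real (left_rows N) / N" using a(2) Nr by (rule divide_strict_right_mono)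
  hence "1/m - 1/N < real (left_rows N) / N" using Nr by (simp add: diff_divide_distrib)
  ultimately show "\<bar>real (left_rows N) / real N - 1/m\<bar> \<le> 1 / real N" by linarith
qed

lemma right_rows_proportion: "(\<lambda>N. real (N - right_start N) / real N) \<longlonglongrightarrow> 1/l"
proof (rule lim_by_bound[where C=1])
  fix N :: nat assume N: "N \<ge> 1"
  hence Nr: "real N > 0" by simp
  have r: "real (N - right_start N) = real N - real (right_start N)" using row_ranges(2)[of N] by (simp add: of_nat_diff)
  have a: "real N / m \<le> real (right_start N)" "real (right_start N) < real N / m + 1"
    unfolding right_start_real by linarith+
  have "real (N - right_start N) / N \<le> (real N - real N / m) / N" unfolding r using a(1) Nr by (intro divide_right_mono) auto
  hence "real (N - right_start N) / N \<le> 1 - 1/m" using Nr by (simp add: diff_divide_distrib)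
  moreover have "(real N - real N / m - 1) / N < real (N - right_start N) / N" unfolding r using a(2) Nr by (intro divide_strict_right_mono) auto
  hence "1 - 1/m - 1/N < real (N - right_start N) / N" using Nr by (simp add: diff_divide_distrib)
  ultimately show "\<bar>real (N - right_start N) / real N - 1/l\<bar> \<le> 1 / real N" unfolding inverse_l by linarith
qed

lemma left_rows_to_infinity: "filterlim left_rows at_top sequentially"
  unfolding filterlim_at_top eventually_sequentially
proof (intro allI exI impI)
  fix Z N :: nat assume "nat \<lceil>m * (real Z + 1)\<rceil> \<le> N"
  hence "m * (real Z + 1) \<le> real N" by linarith
  hence "real Z + 1 \<le> real N / m" using m0 by (simp add: field_simps)
  thus "Z \<le> left_rows N" unfolding left_rows_def by linarith
qed

lemma right_rows_to_infinity: "filterlim (\<lambda>N. N - right_start N) at_top sequentially"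
  unfolding filterlim_at_top eventually_sequentially
proof (intro allI exI impI)
  fix Z N :: nat assume "nat \<lceil>l * (real Z + 2)\<rceil> \<le> N"
  hence "l * (real Z + 2) \<le> real N" by linarith
  hence "real Z + 2 \<le> real N * (1/l)" using l0 by (simp add: field_simps)
  hence "real Z + 2 \<le> real N - real N / m" unfolding inverse_l by (simp add: algebra_simps)
  moreover have "real (right_start N) < real N / m + 1" unfolding right_start_real by linarith
  ultimately show "Z \<le> N - right_start N" by linarith
qed

lemma turning_rows_vanish: "(\<lambda>N. \<Sum>i\<in>{left_rows N..<right_start N}. row_entropy N i) \<longlonglongrightarrow> 0"
proof (rule lim_by_bound[where C="m + l + 2"])
  fix N :: nat assume "N \<ge> 1"
  hence N: "N > 0" by simp
  have "0 \<le> (\<Sum>i\<in>{left_rows N..<right_start N}. row_entropy N i)"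
    using row_entropy_turning(1)[OF N] by (intro sum_nonneg) auto
  moreover have "(\<Sum>i\<in>{left_rows N..<right_start N}. row_entropy N i) \<le> of_nat (card {left_rows N..<right_start N}) * ((m + l + 2) / N)"
    by (rule sum_bounded_above) (use row_entropy_turning(2)[OF N] in auto)
  moreover have "of_nat (card {left_rows N..<right_start N}) * ((m + l + 2) / N) \<le> 1 * ((m + l + 2) / N)"
    using row_ranges[of N] m0 l0 by (intro mult_right_mono) auto
  ultimately show "\<bar>(\<Sum>i\<in>{left_rows N..<right_start N}. row_entropy N i) - 0\<bar> \<le> (m + l + 2) / N" by simp
qed

lemma H_grid_limit:
  assumes cm: "cesaro_mean (edge_entropy m) \<longlonglongrightarrow> c1" and cl: "cesaro_mean (edge_entropy l) \<longlonglongrightarrow> c2"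
  shows "H_grid \<longlonglongrightarrow> (1/m) * (ln m + c1/m) + (1/l) * (ln l + c2/l)"
proof -
  have c1': "(\<lambda>N. cesaro_mean (edge_entropy m) (left_rows N)) \<longlonglongrightarrow> c1"
    by (rule filterlim_compose[OF cm left_rows_to_infinity])
  have c2': "(\<lambda>N. cesaro_mean (edge_entropy l) (N - right_start N)) \<longlonglongrightarrow> c2"
    by (rule filterlim_compose[OF cl right_rows_to_infinity])
  have "(\<lambda>N. (real (left_rows N) / N) * (ln m + cesaro_mean (edge_entropy m) (left_rows N) / m)
     + (real (N - right_start N) / N) * (ln l + cesaro_mean (edge_entropy l) (N - right_start N) / l)
     + (\<Sum>i\<in>{left_rows N..<right_start N}. row_entropy N i))
     \<longlonglongrightarrow> (1/m) * (ln m + c1/m) + (1/l) * (ln l + c2/l) + 0"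
    by (intro tendsto_add tendsto_mult tendsto_divide tendsto_const left_rows_proportion
        right_rows_proportion c1' c2' turning_rows_vanish) (use m0 l0 in auto)
  moreover have "eventually (\<lambda>N. (real (left_rows N) / N) * (ln m + cesaro_mean (edge_entropy m) (left_rows N) / m)
     + (real (N - right_start N) / N) * (ln l + cesaro_mean (edge_entropy l) (N - right_start N) / l)
     + (\<Sum>i\<in>{left_rows N..<right_start N}. row_entropy N i) = H_grid N) sequentially"
    using H_grid_decomposition by (auto simp: eventually_sequentially intro!: exI[of _ 1])
  ultimately show ?thesis by (simp add: Lim_transform_eventually)
qed

theorem H_limit_from_edge_means:
  assumes "cesaro_mean (edge_entropy m) \<longlonglongrightarrow> c1" and "cesaro_mean (edge_entropy l) \<longlonglongrightarrow> c2"
  shows "H_limit T ((1/m) * (ln m + c1/m) + (1/l) * (ln l + c2/l))"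
  unfolding H_limit_def
proof (intro allI impI)
  fix \<Delta> :: "nat \<Rightarrow> nat \<Rightarrow> real set"
  assume ep: "\<forall>N\<ge>1. equivolume_partition N (\<Delta> N)"
  have "eventually (\<lambda>N. H_grid N = H_part N (\<Delta> N) T) sequentially"
    using ep H_part_eq_H_grid by (auto simp: eventually_sequentially intro!: exI[of _ 1])
  thus "(\<lambda>N. H_part N (\<Delta> N) T) \<longlonglongrightarrow> (1/m) * (ln m + c1/m) + (1/l) * (ln l + c2/l)"
    by (rule Lim_transform_eventually[OF H_grid_limit[OF assms]])
qed

text \<open>Step (4) of the plan: both edge terms are continuous functions of the rotation k |-> s k mod 1.\<close>
lemma cesaro_edge_entropy:
  "cesaro_mean (edge_entropy s) n = cesaro_mean (\<lambda>k. phi (1 - frac (s * real k + 0))) n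
     + cesaro_mean (\<lambda>k. phi (frac (s * real k + s))) n"
  unfolding edge_entropy_def cesaro_mean_def by (simp add: sum.distrib add_divide_distrib)

text \<open>Irrational slope: by Weyl, each edge term averages to integral phi = 1/4.\<close>
lemma edge_entropy_mean_irrational:
  assumes irr: "s \<notin> \<rat>"
  shows "cesaro_mean (edge_entropy s) \<longlonglongrightarrow> 1/2"
proof -
  have "cesaro_mean (\<lambda>k. phi (1 - frac (s * real k + 0))) \<longlonglongrightarrow> 1/4"
    using weyl_equidistribution[OF continuous_on_phi_reflected _ irr, of 0]
      integral_reflect_unit[of phi] integral_phi by simp
  moreover have "cesaro_mean (\<lambda>k. phi (frac (s * real k + s))) \<longlonglongrightarrow> 1/4"
    using weyl_equidistribution[OF continuous_on_phi _ irr, of s] integral_phi by simp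
  ultimately show ?thesis unfolding cesaro_edge_entropy by (auto dest: tendsto_add)
qed

text \<open>Sums of phi over the grid j/p and its reflection; the terms at 0 and 1 vanish.\<close>
lemma sum_phi_grid_reflected:
  assumes "p \<ge> 1"
  shows "(\<Sum>j<p. phi (1 - real j / real p)) = (\<Sum>k=1..<p. phi (real k / real p))"
proof -
  have pr: "real p > 0" using assms by simp
  have "(\<Sum>j<p. phi (1 - real j / real p)) = (\<Sum>k\<in>{1..p}. phi (real k / real p))"
  proof (rule sum.reindex_bij_witness[where i="\<lambda>k. p - k" and j="\<lambda>j. p - j"])
    fix k assume k: "k \<in> {..<p}"
    have "real (p - k) = real p - real k" using k by (simp add: of_nat_diff)
    thus "phi (real (p - k) / real p) = phi (1 - real k / real p)" using pr by (simp add: field_simps)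
  qed auto
  also have "\<dots> = (\<Sum>k=1..<p. phi (real k / real p))"
    using assms pr by (simp add: atLeastLessThanSuc_atLeastAtMost[symmetric])
  finally show ?thesis .
qed

lemma sum_phi_grid:
  assumes "p \<ge> 1"
  shows "(\<Sum>j<p. phi (real j / real p)) = (\<Sum>k=1..<p. phi (real k / real p))"
  using assms by (simp add: atLeast0LessThan[symmetric] sum.atLeast_Suc_lessThan)

text \<open>Rational slope s = (p+q)/p: the rotation by q/p runs periodically through the grid j/p.\<close>
lemma edge_entropy_mean_rational:
  fixes p q :: nat
  assumes p: "p \<ge> 1" and cop: "coprime p q" and s: "s = real (p + q) / real p"
  shows "cesaro_mean (edge_entropy s) \<longlonglongrightarrow> 2 * (\<Sum>k=1..<p. phi (real k / real p)) / real p"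
proof -
  have pr: "real p > 0" using p by simp
  have cop': "coprime (int q) (int p)" using cop by (simp add: coprime_commute)
  have frac_nat_add: "frac (real n + y) = frac y" for n :: nat and y :: real
    by (metis frac_add_of_int_left of_int_of_nat_eq)
  have "s * real i + 0 = real i + real_of_int (int q * int i + 0) / real p" for i
    using pr unfolding s by (simp add: field_simps)
  hence e1: "frac (s * real i + 0) = frac (real_of_int (int q * int i + 0) / real p)" for i
    by (simp only: frac_nat_add)
  have "s * real i + s = real (Suc i) + real_of_int (int q * int i + int q) / real p" for i
    using pr unfolding s by (simp add: field_simps)
  hence e2: "frac (s * real i + s) = frac (real_of_int (int q * int i + int q) / real p)" for i
    by (simp only: frac_nat_add)
  have "cesaro_mean (\<lambda>k. phi (1 - frac (s * real k + 0))) \<longlonglongrightarrow> (\<Sum>j<p. phi (1 - real j / real p)) / p"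
    unfolding e1 using rational_rotation_cesaro[OF continuous_on_phi_reflected _ cop', of 0] p by simp
  moreover have "cesaro_mean (\<lambda>k. phi (frac (s * real k + s))) \<longlonglongrightarrow> (\<Sum>j<p. phi (real j / real p)) / p"
    unfolding e2 using rational_rotation_cesaro[OF continuous_on_phi _ cop', of "int q"] p by simp
  ultimately show ?thesis
    unfolding cesaro_edge_entropy sum_phi_grid_reflected[OF p] sum_phi_grid[OF p]
    by (auto dest: tendsto_add simp: add_divide_distrib)
qed

text \<open>Case (2) of the main theorem, which for p = q = 1 (m = 2) also gives case (1).\<close>
theorem H_limit_rational:
  fixes p q :: nat
  assumes p: "p \<ge> 1" and q: "q \<ge> 1" and cop: "coprime p q" and mpq: "m = real (p + q) / real p"
  shows "H_limit T (lyap T +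
    ((2 * real p / (real (p + q))\<^sup>2) * (\<Sum>n=1..<p. phi (real n / real p))
   + (2 * real q / (real (p + q))\<^sup>2) * (\<Sum>n=1..<q. phi (real n / real q))))"
proof -
  have pr: "real p > 0" and qr: "real q > 0" using p q by auto
  have "1/l = real q / real (p + q)" using pr qr unfolding inverse_l mpq by (simp add: field_simps)
  hence lpq: "l = real (p + q) / real q" using l0 qr by (simp add: field_simps)
  define Sp where "Sp = (\<Sum>n=1..<p. phi (real n / real p))"
  define Sq where "Sq = (\<Sum>n=1..<q. phi (real n / real q))"
  have cm: "cesaro_mean (edge_entropy m) \<longlonglongrightarrow> 2 * Sp / real p"
    unfolding Sp_def by (rule edge_entropy_mean_rational[OF p cop mpq])
  have cl: "cesaro_mean (edge_entropy l) \<longlonglongrightarrow> 2 * Sq / real q"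
    unfolding Sq_def by (rule edge_entropy_mean_rational[OF q, of p]) (use cop lpq in \<open>simp_all add: coprime_commute add.commute\<close>)
  have "H_limit T ((1/m) * (ln m + (2 * Sp / real p)/m) + (1/l) * (ln l + (2 * Sq / real q)/l))"
    by (rule H_limit_from_edge_means[OF cm cl])
  moreover have "(1/m) * (ln m + (2 * Sp / real p)/m) + (1/l) * (ln l + (2 * Sq / real q)/l)
      = lyap T + ((2 * real p / (real (p + q))\<^sup>2) * Sp + (2 * real q / (real (p + q))\<^sup>2) * Sq)"
  proof -
    have "(2 * Sp / real p)/m * (1/m) = (2 * real p / (real (p + q))\<^sup>2) * Sp"
      "(2 * Sq / real q)/l * (1/l) = (2 * real q / (real (p + q))\<^sup>2) * Sq"
      unfolding mpq lpq using pr qr by (simp_all add: field_simps power2_eq_square)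
    moreover have "(1/m) * (ln m + (2 * Sp / real p)/m) + (1/l) * (ln l + (2 * Sq / real q)/l)
        = ((1/m) * ln m + (1/l) * ln l) + ((2 * Sp / real p)/m * (1/m) + (2 * Sq / real q)/l * (1/l))"
      by (simp add: algebra_simps)
    ultimately show ?thesis unfolding lyap_T by simp
  qed
  ultimately show ?thesis unfolding Sp_def Sq_def by simp
qed

text \<open>Case (3) of the main theorem: D = (1/m^2 + 1/l^2)/2 = (m^2 - 2m + 2)/(2 m^2).\<close>
theorem H_limit_irrational:
  assumes mi: "m \<notin> \<rat>"
  shows "H_limit T (lyap T + (m\<^sup>2 - 2 * m + 2) / (2 * m\<^sup>2))"
proof -
  have li: "l \<notin> \<rat>"
  proof
    assume "l \<in> \<rat>"
    hence "1 / (1 - 1/l) \<in> \<rat>" by (intro Rats_divide Rats_diff) auto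
    thus False using mi m0 by (simp add: inverse_l)
  qed
  have "(1/m) * (ln m + (1/2)/m) + (1/l) * (ln l + (1/2)/l) = lyap T + (1/m)^2/2 + (1/l)^2/2"
    unfolding lyap_T using m0 l0 by (simp add: field_simps power2_eq_square)
  also have "\<dots> = lyap T + (m\<^sup>2 - 2 * m + 2) / (2 * m\<^sup>2)"
    unfolding inverse_l using m0 by (simp add: field_simps power2_eq_square)
  finally show ?thesis
    using H_limit_from_edge_means[OF edge_entropy_mean_irrational[OF mi] edge_entropy_mean_irrational[OF li]]
    by simp
qed

end

theorem mainTheorem6:
  fixes m l :: real
  assumes "m > 1" and "l > 1" and "1 / m + 1 / l = 1"
  defines "f \<equiv> (\<lambda>x. if x \<le> 1 / m then m * x else l * (1 - x))"
  shows "lyap f = (1 / m) * ln m + (1 / l) * ln l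
    \<and> (m = 2 \<longrightarrow> H_limit f (lyap f + 0))
    \<and> (\<forall>p q :: nat. m \<in> \<rat> \<and> m \<noteq> 2 \<and> p \<ge> 1 \<and> q \<ge> 1 \<and> coprime p q
           \<and> m = real (p + q) / real p \<longrightarrow>
           H_limit f (lyap f +
             ((2 * real p / (real (p + q))\<^sup>2) * (\<Sum>n=1..<p. phi (real n / real p))
            + (2 * real q / (real (p + q))\<^sup>2) * (\<Sum>n=1..<q. phi (real n / real q)))))
    \<and> (m \<notin> \<rat> \<longrightarrow> H_limit f (lyap f + (m\<^sup>2 - 2 * m + 2) / (2 * m\<^sup>2)))"
proof -
  interpret skew_tent m l using assms(1-3) by unfold_locales
  have fT: "f = T" unfolding f_def by (rule T_eq)
  have "m = 2 \<longrightarrow> H_limit T (lyap T + 0)"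
  proof
    assume "m = 2"
    hence "m = real (1 + 1) / real 1" by simp
    from H_limit_rational[OF _ _ _ this] show "H_limit T (lyap T + 0)" by simp
  qed
  thus ?thesis unfolding fT using lyap_T H_limit_rational H_limit_irrational by blast
qed

end
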